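(* Let $L=2U\oplus\langle-6\rangle\oplus\langle-2\rangle$ and let $G$ be either $\widetilde{\operatorname{O}}^+(L)$ or $\operatorname{O}^+(L)$. Then there are exactly two $G$-orbits of isotropic lines in $L\otimes\mathbb{Q}$ and exactly two $G$-orbits of totally isotropic planes in $L\otimes\mathbb{Q}$ (in particular each $\operatorname{O}^+(L)$-orbit of such subspaces is a single $\widetilde{\operatorname{O}}^+(L)$-orbit), and the Tits' building $\mathcal{B}(G)$ is a path with four nodes: labelling the line orbits $[\ell_0],[\ell_1]$ and the plane orbits $[\Pi_0],[\Pi_1]$ suitably, the edges are exactly $[\Pi_0]$—$[\ell_0]$, $[\ell_0]$—$[\Pi_1]$ and $[\Pi_1]$—$[\ell_1]$.
   Context: $U$ is the hyperbolic plane, $\langle d\rangle$ the rank-one lattice generated by a vector of square $d$; $L$ has signature $(2,4)$. $\widetilde{\operatorname{O}}(L)$ is the kernel of $\operatorname{O}(L)\to\operatorname{O}(L^{\vee}/L)$; the real spinor norm of a product of reflections $\sigma_{w_1}\cdots\sigma_{w_m}$ (with $\sigma_w(x)=x-\frac{2(x,w)}{(w,w)}w$) is $\prod_i(-(w_i,w_i)/2)\in\mathbb{R}^*/(\mathbb{R}^* )^2$, and a superscript $+$ denotes the subgroup of spinor norm $1$. For $G\subset\operatorname{O}^+(L\otimes\mathbb{Q})$, the Tits' building $\mathcal{B}(G)$ is the bipartite graph whose nodes are the $G$-orbits of isotropic lines and the $G$-orbits of totally isotropic planes in $L\otimes\mathbb{Q}$, with an edge between the orbit of a line $\ell$ and the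 orbit of a plane $\Pi$ iff $g\ell\subset\Pi$ for some $g\in G$. *)

theory Defs
  imports "HOL-Analysis.Analysis"
begin

text \<open>The lattice L = 2U + <-6> + <-2> is Z^6 (inside Q^6 = L tensor Q) with the
  bilinear form below; coordinates 0,1 and 2,3 are the two hyperbolic planes,
  coordinate 4 spans <-6>, coordinate 5 spans <-2>.\<close>

definition lform :: "'a::comm_ring_1 ^ 6 \<Rightarrow> 'a ^ 6 \<Rightarrow> 'a" where
  "lform x y = x$0 * y$1 + x$1 * y$0 + x$2 * y$3 + x$3 * y$2
              - 6 * x$4 * y$4 - 2 * x$5 * y$5"

definition latL :: "(rat ^ 6) set" where
  "latL = {x. \<forall>i. x$i \<in> \<int>}"

definition dualL :: "(rat ^ 6) set" where
  "dualL = {x. \<forall>y\<in>latL. lform x y \<in> \<int>}"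

definition int_mat :: "rat ^ 6 ^ 6 \<Rightarrow> bool" where
  "int_mat M \<longleftrightarrow> (\<forall>i j. M$i$j \<in> \<int>)"

definition OL :: "(rat ^ 6 ^ 6) set" where
  "OL = {M. int_mat M \<and> (\<exists>N. int_mat N \<and> M ** N = mat 1 \<and> N ** M = mat 1)
            \<and> (\<forall>x y. lform (M *v x) (M *v y) = lform x y)}"

text \<open>Stable orthogonal group: kernel of O(L) -> O(L^dual / L).\<close>
definition OtL :: "(rat ^ 6 ^ 6) set" where
  "OtL = {M \<in> OL. \<forall>x\<in>dualL. M *v x - x \<in> latL}"

definition reflR :: "real ^ 6 \<Rightarrow> real ^ 6 \<Rightarrow> real ^ 6" where
  "reflR w x = x - (2 * lform x w / lform w w) *s w"

text \<open>Real spinor norm equal to 1: g = sigma_{w_1} ... sigma_{w_m} with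
  prod (-(w_i,w_i)/2) positive (the spinor norm is well defined).\<close>
definition spinor_one :: "real ^ 6 ^ 6 \<Rightarrow> bool" where
  "spinor_one R \<longleftrightarrow> (\<exists>ws. (\<forall>w\<in>set ws. lform w w \<noteq> 0)
      \<and> (\<lambda>x. R *v x) = foldr (\<lambda>w f. reflR w \<circ> f) ws id
      \<and> (\<Prod>w\<leftarrow>ws. - lform w w / 2) > 0)"

definition realify :: "rat ^ 6 ^ 6 \<Rightarrow> real ^ 6 ^ 6" where
  "realify M = (\<chi> i j. of_rat (M$i$j))"

definition OplusL :: "(rat ^ 6 ^ 6) set" where
  "OplusL = {M \<in> OL. spinor_one (realify M)}"

definition OtplusL :: "(rat ^ 6 ^ 6) set" where
  "OtplusL = {M \<in> OtL. spinor_one (realify M)}"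

definition tiso :: "nat \<Rightarrow> (rat ^ 6) set \<Rightarrow> bool" where
  "tiso k S \<longleftrightarrow> vec.subspace S \<and> vec.dim S = k \<and> (\<forall>x\<in>S. \<forall>y\<in>S. lform x y = 0)"

definition orbit :: "(rat ^ 6 ^ 6) set \<Rightarrow> (rat ^ 6) set \<Rightarrow> (rat ^ 6) set set" where
  "orbit G S = {(\<lambda>x. M *v x) ` S | M. M \<in> G}"

text \<open>Edge in the Tits building between the orbit of a line and that of a plane.\<close>
definition bedge :: "(rat ^ 6 ^ 6) set \<Rightarrow> (rat ^ 6) set \<Rightarrow> (rat ^ 6) set \<Rightarrow> bool" where
  "bedge G l P \<longleftrightarrow> (\<exists>M\<in>G. (\<lambda>x. M *v x) ` l \<subseteq> P)"

end

theory Submission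
  imports Defs
begin

text \<open>Eichler transformations and a reflection in a \<open>-2\<close>-vector lie in \<open>\<tilde>O\<^sup>+(L)\<close>; acting
  on integral coordinates they run Euclid's algorithm on the two hyperbolic planes and a
  descent on the rest, so every primitive isotropic vector of \<open>L\<close> is equivalent to
  \<open>e0 = (1,0,0,0,0,0)\<close> or to \<open>w1 = (0,0,2,2,1,1)\<close>. Even \<open>O(L)\<close> cannot move \<open>w1\<close> into
  the plane spanned by \<open>e0\<close> and \<open>e2 = (0,0,1,0,0,0)\<close>: \<open>w1\<close> pairs with \<open>L\<close> into
  \<open>2\<int>\<close> but \<open>w1/2 \<notin> L\<close>, and no vector of that plane has both properties.

  A totally isotropic plane contains a vector of the first kind: otherwise all its
  primitive vectors are congruent to \<open>w1\<close> modulo \<open>2L\<close>, and halving differences of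
  them gives an infinite descent on \<open>2\<times>2\<close> minors. Moving that vector to \<open>e0\<close> and
  reducing the plane with transformations fixing \<open>e0\<close> shows that each plane is
  equivalent to \<open>\<langle>e0, e2\<rangle>\<close> or \<open>\<langle>e0, w1\<rangle>\<close>.\<close>

lemma UNIV_6: "(UNIV::6 set) = {0,1,2,3,4,5}"
proof -
  have "card {0,1,2,3,4,5::6} = 6" "card (UNIV::6 set) = 6" by simp_all
  then show ?thesis using card_subset_eq[of "UNIV::6 set" "{0,1,2,3,4,5}"] by simp
qed

lemma all_6: "(\<forall>i::6. P i) \<longleftrightarrow> P 0 \<and> P 1 \<and> P 2 \<and> P 3 \<and> P 4 \<and> P 5"
  by (metis UNIV_6 UNIV_I insertE singletonD)

lemma vec6_eq_iff:
  "(x::'a^6) = y \<longleftrightarrow> x$0 = y$0 \<and> x$1 = y$1 \<and> x$2 = y$2 \<and> x$3 = y$3 \<and> x$4 = y$4 \<and> x$5 = y$5"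
  by (simp add: vec_eq_iff all_6)

definition vec6 :: "'a::zero \<Rightarrow> 'a \<Rightarrow> 'a \<Rightarrow> 'a \<Rightarrow> 'a \<Rightarrow> 'a \<Rightarrow> 'a^6" where
  "vec6 a b c d p q = (\<chi> i. if i = 0 then a else if i = 1 then b else if i = 2 then c else
      if i = 3 then d else if i = 4 then p else q)"

lemma vec6_nth [simp]:
  "vec6 a b c d p q $ 0 = a" "vec6 a b c d p q $ 1 = b" "vec6 a b c d p q $ 2 = c"
  "vec6 a b c d p q $ 3 = d" "vec6 a b c d p q $ 4 = p" "vec6 a b c d p q $ 5 = q"
  by (simp_all add: vec6_def)

lemma vec6_eq_vec6_iff [simp]:
  "vec6 a b c d p q = vec6 a' b' c' d' p' q' \<longleftrightarrow>
     a = a' \<and> b = b' \<and> c = c' \<and> d = d' \<and> p = p' \<and> q = q'"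
  by (simp add: vec6_eq_iff)

lemma vec6_eq_0_iff [simp]:
  "vec6 a b c d p q = 0 \<longleftrightarrow> a = 0 \<and> b = 0 \<and> c = 0 \<and> d = 0 \<and> p = 0 \<and> q = 0"
  by (simp add: vec6_eq_iff)

lemma vec6_add:
  "vec6 a b c d p q + vec6 a' b' c' d' p' q' = vec6 (a+a') (b+b') (c+c') (d+d') (p+p') (q+q')"
  and vec6_diff:
  "vec6 a b c d p q - vec6 a' b' c' d' p' q' = vec6 (a-a') (b-b') (c-c') (d-d') (p-p') (q-q')"
  and vec6_smult:
  "k *s vec6 a b c d p q = vec6 (k*a) (k*b) (k*c) (k*d) (k*p) (k*q)"
  and vec6_uminus:
  "- vec6 a b c d p q = vec6 (-a) (-b) (-c) (-d) (-p) (-q)"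
  by (simp_all add: vec6_eq_iff)

lemmas vec6_arith = vec6_add vec6_diff vec6_smult vec6_uminus

lemma lform_vec6 [simp]:
  "lform (vec6 a b c d p q) (vec6 a' b' c' d' p' q') =
     a*b' + b*a' + c*d' + d*c' - 6*p*p' - 2*q*q'"
  by (simp add: lform_def)

lemma lform_add_left [simp]: "lform (x + y) z = lform x z + lform y z"
  and lform_add_right [simp]: "lform z (x + y) = lform z x + lform z y"
  and lform_diff_left [simp]: "lform (x - y) (z::'a::comm_ring_1^6) = lform x z - lform y z"
  and lform_diff_right [simp]: "lform z (x - y) = lform z x - lform z y"
  and lform_smult_left [simp]: "lform (c *s x) z = c * lform x z"
  and lform_smult_right [simp]: "lform z (c *s x) = c * lform z x"
  and lform_minus_left [simp]: "lform (- x) z = - lform x z"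
  and lform_minus_right [simp]: "lform z (- x) = - lform z x"
  and lform_zero_left [simp]: "lform 0 z = 0"
  and lform_zero_right [simp]: "lform z 0 = 0"
  by (simp_all add: lform_def algebra_simps)

lemma lform_commute: "lform x y = lform y x"
  by (simp add: lform_def algebra_simps)

section \<open>Eichler transformations and reflections\<close>

definition eichler :: "'a::field_char_0^6 \<Rightarrow> 'a^6 \<Rightarrow> 'a^6 \<Rightarrow> 'a^6" where
  "eichler e u x = x - lform x e *s u + lform x u *s e - (lform u u / 2 * lform x e) *s e"

definition reflection :: "'a::field_char_0^6 \<Rightarrow> 'a^6 \<Rightarrow> 'a^6" where
  "reflection w x = x - (2 * lform x w / lform w w) *s w"

lemma reflR_eq_reflection: "reflR = reflection"
  by (simp add: fun_eq_iff reflR_def reflection_def)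

lemma linear_eichler: "Vector_Spaces.linear (*s) (*s) (eichler e u)"
  by unfold_locales (simp_all add: eichler_def vec_eq_iff algebra_simps add_divide_distrib)

lemma linear_reflection: "Vector_Spaces.linear (*s) (*s) (reflection w)"
  by unfold_locales (simp_all add: reflection_def vec_eq_iff algebra_simps add_divide_distrib)

lemma eichler_eichler:
  assumes "lform e e = 0" "lform e a = 0" "lform e b = 0"
  shows "eichler e a (eichler e b x) = eichler e (a + b) x"
proof -
  have "lform a e = 0" "lform b e = 0" "lform b a = lform a b"
    using assms lform_commute by metis+
  then show ?thesis
    using assms by (simp add: eichler_def vec_eq_iff field_simps; (simp add: algebra_simps)?)
qed

lemma eichler_0: "eichler e 0 x = x"
  by (simp add: eichler_def)

lemma lform_eichler:
  assumes "lform e e = 0" "lform e u = 0"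
  shows "lform (eichler e u x) (eichler e u y) = lform x y"
proof -
  have "lform u e = 0" "lform y x = lform x y" "lform e x = lform x e" "lform e y = lform y e"
     "lform u x = lform x u" "lform u y = lform y u"
    using assms lform_commute by metis+
  then show ?thesis
    using assms by (simp add: eichler_def field_simps; (simp add: algebra_simps)?)
qed

lemma lform_reflection:
  assumes "lform w w \<noteq> 0"
  shows "lform (reflection w x) (reflection w y) = lform x y"
proof -
  have "lform w x = lform x w" "lform w y = lform y w" "lform y x = lform x y"
    using lform_commute by metis+
  then show ?thesis
    using assms by (simp add: reflection_def field_simps; (simp add: algebra_simps)?)
qed

lemma reflection_reflection:
  assumes "lform w w \<noteq> 0"
  shows "reflection w (reflection w x) = x"
proof -
  have "lform w x = lform x w" using lform_commute by metis
  then show ?thesis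
    using assms by (simp add: reflection_def vec_eq_iff field_simps; (simp add: algebra_simps)?)
qed

lemma eichler_eq_reflection_reflection:
  assumes "lform e e = 0" "lform e u = 0" "lform u u \<noteq> 0"
  shows "eichler e u x = reflection u (reflection (u + (- lform u u / 2) *s e) x)"
proof -
  have "lform u e = 0" "lform e x = lform x e" "lform u x = lform x u"
    using assms lform_commute by metis+
  then show ?thesis
    using assms
    by (simp add: eichler_def reflection_def vec_eq_iff field_simps; (simp add: algebra_simps)?)
qed

lemma lform_add_smult_isotropic:
  "lform e e = 0 \<Longrightarrow> lform v e = 0 \<Longrightarrow> lform (v + t *s e) (v + t *s e) = lform v v"
  by (simp add: lform_commute[of e v])

definition of_rat_vec :: "rat^6 \<Rightarrow> real^6" where
  "of_rat_vec x = (\<chi> i. of_rat (x$i))"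

lemma of_rat_vec_nth [simp]: "of_rat_vec x $ i = of_rat (x$i)"
  by (simp add: of_rat_vec_def)

lemma of_rat_lform [simp]: "of_rat (lform x y) = lform (of_rat_vec x) (of_rat_vec y)"
  by (simp add: lform_def of_rat_add of_rat_mult of_rat_diff)

lemma of_rat_vec_add [simp]: "of_rat_vec (x + y) = of_rat_vec x + of_rat_vec y"
  by (simp add: vec_eq_iff of_rat_add)

lemma of_rat_vec_eichler: "of_rat_vec (eichler e u x) = eichler (of_rat_vec e) (of_rat_vec u) (of_rat_vec x)"
  by (simp add: vec_eq_iff eichler_def of_rat_add of_rat_mult of_rat_diff of_rat_divide)

lemma of_rat_vec_reflection: "of_rat_vec (reflection w x) = reflection (of_rat_vec w) (of_rat_vec x)"
  by (simp add: vec_eq_iff reflection_def of_rat_add of_rat_mult of_rat_diff of_rat_divide)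

lemma of_rat_vec_axis [simp]: "of_rat_vec (axis j 1) = axis j 1"
  by (simp add: vec_eq_iff axis_def)

lemma realify_matrix:
  assumes "Vector_Spaces.linear (*s) (*s) g" "\<And>j. g (axis j 1) = of_rat_vec (f (axis j 1))"
  shows "realify (matrix f) = matrix g"
  using assms by (simp add: realify_def matrix_def vec_eq_iff)

lemma realify_mult: "realify (A ** B) = realify A ** realify B"
  by (simp add: realify_def matrix_matrix_mult_def vec_eq_iff of_rat_sum of_rat_mult)

lemma realify_mat_1: "realify (mat 1) = mat 1"
  by (simp add: realify_def mat_def vec_eq_iff)

lemma latL_iff:
  "x \<in> latL \<longleftrightarrow> x$0 \<in> \<int> \<and> x$1 \<in> \<int> \<and> x$2 \<in> \<int> \<and> x$3 \<in> \<int> \<and> x$4 \<in> \<int> \<and> x$5 \<in> \<int>"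
  by (simp add: latL_def all_6)

lemma latL_add: "x \<in> latL \<Longrightarrow> y \<in> latL \<Longrightarrow> x + y \<in> latL"
  and latL_diff: "x \<in> latL \<Longrightarrow> y \<in> latL \<Longrightarrow> x - y \<in> latL"
  and latL_minus: "x \<in> latL \<Longrightarrow> - x \<in> latL"
  and latL_smult: "c \<in> \<int> \<Longrightarrow> x \<in> latL \<Longrightarrow> c *s x \<in> latL"
  and latL_zero: "0 \<in> latL"
  and latL_axis: "axis j 1 \<in> latL"
  by (auto simp: latL_def axis_def)

lemma vec6_in_latL:
  "a \<in> \<int> \<Longrightarrow> b \<in> \<int> \<Longrightarrow> c \<in> \<int> \<Longrightarrow> d \<in> \<int> \<Longrightarrow> p \<in> \<int> \<Longrightarrow> q \<in> \<int> \<Longrightarrow> vec6 a b c d p q \<in> latL"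
  by (simp add: latL_iff)

lemma lform_Ints: "x \<in> latL \<Longrightarrow> y \<in> latL \<Longrightarrow> lform x y \<in> \<int>"
  by (simp add: latL_iff lform_def)

lemma lform_self_half_Ints: "x \<in> latL \<Longrightarrow> lform x x / 2 \<in> \<int>"
proof -
  assume "x \<in> latL"
  then have "x$0*x$1 + x$2*x$3 - 3*x$4*x$4 - x$5*x$5 \<in> \<int>" by (simp add: latL_iff)
  moreover have "lform x x / 2 = x$0*x$1 + x$2*x$3 - 3*x$4*x$4 - x$5*x$5"
    by (simp add: lform_def field_simps)
  ultimately show ?thesis by (simp only:)
qed

lemma int_mat_matrix: "(\<And>j. f (axis j 1) \<in> latL) \<Longrightarrow> int_mat (matrix f)"
  by (simp add: int_mat_def matrix_def latL_def)

lemma int_mat_mult: "int_mat A \<Longrightarrow> int_mat B \<Longrightarrow> int_mat (A ** B)"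
  by (simp add: int_mat_def matrix_matrix_mult_def Ints_sum Ints_mult)

lemma int_mat_mat_1: "int_mat (mat 1)"
  by (simp add: int_mat_def mat_def)

lemma int_mat_latL: "int_mat M \<Longrightarrow> x \<in> latL \<Longrightarrow> M *v x \<in> latL"
  by (simp add: int_mat_def latL_def matrix_vector_mult_def Ints_sum Ints_mult)

definition refl_prod :: "(real^6) list \<Rightarrow> real^6 \<Rightarrow> real^6" where
  "refl_prod ws = foldr (\<lambda>w f. reflR w \<circ> f) ws id"

lemma refl_prod_append: "refl_prod (ws @ vs) = refl_prod ws \<circ> refl_prod vs"
  by (induct ws) (simp_all add: refl_prod_def comp_assoc)

lemma refl_prod_rev_inverse:
  "\<forall>w\<in>set ws. lform w w \<noteq> 0 \<Longrightarrow> refl_prod (rev ws) \<circ> refl_prod ws = id"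
proof (induct ws)
  case Nil
  then show ?case by (simp add: refl_prod_def)
next
  case (Cons w ws)
  have "refl_prod (rev (w # ws)) \<circ> refl_prod (w # ws) =
      refl_prod (rev ws) \<circ> (reflR w \<circ> reflR w) \<circ> refl_prod ws"
    by (simp add: refl_prod_append comp_assoc) (simp add: refl_prod_def)
  also have "reflR w \<circ> reflR w = id"
    using Cons.prems by (simp add: fun_eq_iff reflR_eq_reflection reflection_reflection)
  finally show ?case using Cons by simp
qed

lemma spinor_one_iff:
  "spinor_one R \<longleftrightarrow> (\<exists>ws. (\<forall>w\<in>set ws. lform w w \<noteq> 0)
      \<and> (\<lambda>x. R *v x) = refl_prod ws \<and> (\<Prod>w\<leftarrow>ws. - lform w w / 2) > 0)"
  by (simp add: spinor_one_def refl_prod_def)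

lemma spinor_one_mat_1: "spinor_one (mat 1)"
  unfolding spinor_one_iff by (rule exI[of _ "[]"]) (simp add: refl_prod_def fun_eq_iff)

lemma spinor_one_mult:
  assumes "spinor_one A" "spinor_one B"
  shows "spinor_one (A ** B)"
proof -
  obtain ws vs where
    "\<forall>w\<in>set ws. lform w w \<noteq> 0" "(*v) A = refl_prod ws" "(\<Prod>w\<leftarrow>ws. - lform w w / 2) > 0"
    "\<forall>w\<in>set vs. lform w w \<noteq> 0" "(*v) B = refl_prod vs" "(\<Prod>w\<leftarrow>vs. - lform w w / 2) > 0"
    using assms unfolding spinor_one_iff by blast
  then show ?thesis
    unfolding spinor_one_iff
    by (intro exI[of _ "ws @ vs"])
      (auto simp: refl_prod_append fun_eq_iff matrix_vector_mul_assoc[symmetric] dest: fun_cong)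
qed

lemma spinor_one_inverse:
  assumes "spinor_one A" "A ** B = mat 1"
  shows "spinor_one B"
proof -
  obtain ws where ws: "\<forall>w\<in>set ws. lform w w \<noteq> 0" "(*v) A = refl_prod ws"
      "(\<Prod>w\<leftarrow>ws. - lform w w / 2) > 0"
    using assms(1) unfolding spinor_one_iff by blast
  have "(*v) B = refl_prod (rev ws) \<circ> (refl_prod ws \<circ> (*v) B)"
    using refl_prod_rev_inverse[OF ws(1)] by (simp add: comp_assoc[symmetric])
  also have "refl_prod ws \<circ> (*v) B = id"
    using assms(2) ws(2) by (simp add: fun_eq_iff matrix_vector_mul_assoc) (metis matrix_vector_mul_assoc matrix_vector_mul_lid)
  finally have "(*v) B = refl_prod (rev ws)" by simp
  moreover have "(\<Prod>w\<leftarrow>rev ws. - lform w w / 2) = (\<Prod>w\<leftarrow>ws. - lform w w / 2)"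
    by (induct ws) (simp_all add: mult.commute)
  ultimately show ?thesis
    unfolding spinor_one_iff using ws by (intro exI[of _ "rev ws"]) auto
qed

lemma OL_mult:
  assumes "A \<in> OL" "B \<in> OL"
  shows "A ** B \<in> OL"
proof -
  obtain NA where a: "int_mat A" "int_mat NA" "A ** NA = mat 1" "NA ** A = mat 1"
      "\<forall>x y. lform (A *v x) (A *v y) = lform x y"
    using assms(1) by (auto simp: OL_def)
  obtain NB where b: "int_mat B" "int_mat NB" "B ** NB = mat 1" "NB ** B = mat 1"
      "\<forall>x y. lform (B *v x) (B *v y) = lform x y"
    using assms(2) by (auto simp: OL_def)
  have "(A ** B) ** (NB ** NA) = mat 1"
    by (metis a(3) b(3) matrix_mul_assoc matrix_mul_rid)
  moreover have "(NB ** NA) ** (A ** B) = mat 1"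
    by (metis a(4) b(4) matrix_mul_assoc matrix_mul_rid)
  ultimately show ?thesis
    using a b by (auto simp: OL_def int_mat_mult matrix_vector_mul_assoc[symmetric]
        intro!: exI[of _ "NB ** NA"])
qed

lemma OL_inverse:
  assumes "A \<in> OL"
  obtains B where "B \<in> OL" "A ** B = mat 1" "B ** A = mat 1"
proof -
  obtain B where b: "int_mat A" "int_mat B" "A ** B = mat 1" "B ** A = mat 1"
      "\<forall>x y. lform (A *v x) (A *v y) = lform x y"
    using assms by (auto simp: OL_def)
  have "lform (B *v x) (B *v y) = lform x y" for x y
    using b(5)[rule_format, of "B *v x" "B *v y"] b(3) by (simp add: matrix_vector_mul_assoc)
  then have "B \<in> OL"
    using b by (auto simp: OL_def)
  then show ?thesis
    using that b by blast
qed

lemma OL_mat_1: "mat 1 \<in> OL"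
  by (auto simp: OL_def int_mat_mat_1 intro!: exI[of _ "mat 1"])

lemma OL_latL: "A \<in> OL \<Longrightarrow> x \<in> latL \<Longrightarrow> A *v x \<in> latL"
  by (auto simp: OL_def int_mat_latL)

lemma OL_lform: "A \<in> OL \<Longrightarrow> lform (A *v x) (A *v y) = lform x y"
  by (auto simp: OL_def)

lemma OL_dualL:
  assumes "A \<in> OL" "x \<in> dualL"
  shows "A *v x \<in> dualL"
proof -
  obtain B where B: "B \<in> OL" "A ** B = mat 1"
    using OL_inverse assms(1) by blast
  have "lform (A *v x) y \<in> \<int>" if "y \<in> latL" for y
  proof -
    have "lform (A *v x) y = lform (A *v x) (A *v (B *v y))"
      by (simp add: matrix_vector_mul_assoc B(2))
    also have "\<dots> = lform x (B *v y)"
      using OL_lform[OF assms(1)] by simp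
    finally show ?thesis
      using assms(2) OL_latL[OF B(1) that] by (simp add: dualL_def)
  qed
  then show ?thesis
    by (simp add: dualL_def)
qed

lemma OtL_mult:
  assumes "A \<in> OtL" "B \<in> OtL"
  shows "A ** B \<in> OtL"
proof -
  have "(A ** B) *v x - x \<in> latL" if "x \<in> dualL" for x
  proof -
    have "B *v x \<in> dualL"
      using OL_dualL assms(2) that by (auto simp: OtL_def)
    then have "A *v (B *v x) - B *v x \<in> latL" "B *v x - x \<in> latL"
      using assms that by (auto simp: OtL_def)
    then have "(A *v (B *v x) - B *v x) + (B *v x - x) \<in> latL"
      by (rule latL_add)
    then show ?thesis
      by (simp add: matrix_vector_mul_assoc)
  qed
  then show ?thesis
    using assms OL_mult by (auto simp: OtL_def)
qed

lemma OtL_inverse: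
  assumes "A \<in> OtL" "B \<in> OL" "A ** B = mat 1"
  shows "B \<in> OtL"
proof -
  have "B *v x - x \<in> latL" if "x \<in> dualL" for x
  proof -
    have "B *v x \<in> dualL"
      using OL_dualL assms(2) that by auto
    then have "A *v (B *v x) - B *v x \<in> latL"
      using assms(1) by (auto simp: OtL_def)
    then have "- (A *v (B *v x) - B *v x) \<in> latL"
      by (rule latL_minus)
    then show ?thesis
      by (simp add: matrix_vector_mul_assoc assms(3))
  qed
  then show ?thesis
    using assms by (auto simp: OtL_def)
qed

definition lattice_group :: "(rat^6^6) set \<Rightarrow> bool" where
  "lattice_group G \<longleftrightarrow> G \<subseteq> OL \<and> mat 1 \<in> G \<and> (\<forall>A\<in>G. \<forall>B\<in>G. A ** B \<in> G) \<and>
     (\<forall>A\<in>G. \<exists>B\<in>G. A ** B = mat 1 \<and> B ** A = mat 1)"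

lemma lattice_group_inverse:
  assumes "lattice_group G" "A \<in> G"
  obtains B where "B \<in> G" "A ** B = mat 1" "B ** A = mat 1"
  using assms by (auto simp: lattice_group_def)

lemma lattice_group_OtplusL: "lattice_group OtplusL"
proof -
  have "\<exists>B\<in>OtplusL. A ** B = mat 1 \<and> B ** A = mat 1" if "A \<in> OtplusL" for A
  proof -
    have "A \<in> OL"
      using that by (simp add: OtplusL_def OtL_def)
    then obtain B where B: "B \<in> OL" "A ** B = mat 1" "B ** A = mat 1"
      using OL_inverse by blast
    have "spinor_one (realify B)"
      using spinor_one_inverse[of "realify A" "realify B"] that B(2)
      by (simp add: OtplusL_def realify_mult[symmetric] realify_mat_1)
    then show ?thesis
      using B that OtL_inverse by (auto simp: OtplusL_def)
  qed
  moreover have "A ** B \<in> OtplusL" if "A \<in> OtplusL" "B \<in> OtplusL" for A B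
    using that OtL_mult spinor_one_mult by (auto simp: OtplusL_def realify_mult)
  moreover have "mat 1 \<in> OtplusL"
    by (simp add: OtplusL_def OtL_def OL_mat_1 latL_zero realify_mat_1 spinor_one_mat_1)
  ultimately show ?thesis
    by (auto simp: lattice_group_def OtplusL_def OtL_def)
qed

lemma lattice_group_OplusL: "lattice_group OplusL"
proof -
  have "\<exists>B\<in>OplusL. A ** B = mat 1 \<and> B ** A = mat 1" if "A \<in> OplusL" for A
  proof -
    have "A \<in> OL"
      using that by (simp add: OplusL_def)
    then obtain B where B: "B \<in> OL" "A ** B = mat 1" "B ** A = mat 1"
      using OL_inverse by blast
    have "spinor_one (realify B)"
      using spinor_one_inverse[of "realify A" "realify B"] that B(2)
      by (simp add: OplusL_def realify_mult[symmetric] realify_mat_1)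
    then show ?thesis
      using B that by (auto simp: OplusL_def)
  qed
  then show ?thesis
    by (auto simp: lattice_group_def OplusL_def OL_mat_1 OL_mult realify_mult realify_mat_1
        spinor_one_mult spinor_one_mat_1)
qed

lemma OtplusL_subset_OplusL: "OtplusL \<subseteq> OplusL"
  by (auto simp: OtplusL_def OplusL_def OtL_def)

lemma OtplusL_mat_1: "mat 1 \<in> OtplusL"
  using lattice_group_OtplusL by (simp add: lattice_group_def)

lemma OtplusL_mult: "A \<in> OtplusL \<Longrightarrow> B \<in> OtplusL \<Longrightarrow> A ** B \<in> OtplusL"
  using lattice_group_OtplusL by (simp add: lattice_group_def)

lemma OtplusL_subset_OL: "OtplusL \<subseteq> OL"
  by (auto simp: OtplusL_def OtL_def)

lemma matrix_in_OtplusL: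
  fixes f g :: "rat^6 \<Rightarrow> rat^6" and fR :: "real^6 \<Rightarrow> real^6"
  assumes lin: "Vector_Spaces.linear (*s) (*s) f" "Vector_Spaces.linear (*s) (*s) g"
    and inverse: "\<And>x. f (g x) = x" "\<And>x. g (f x) = x"
    and integral: "\<And>j. f (axis j 1) \<in> latL" "\<And>j. g (axis j 1) \<in> latL"
    and isometry: "\<And>x y. lform (f x) (f y) = lform x y"
    and stable: "\<And>x. x \<in> dualL \<Longrightarrow> f x - x \<in> latL"
    and real: "Vector_Spaces.linear (*s) (*s) fR" "\<And>j. fR (axis j 1) = of_rat_vec (f (axis j 1))"
    and spinor: "spinor_one (matrix fR)"
  shows "matrix f \<in> OtplusL"
proof -
  have mf: "matrix f *v x = f x" and mg: "matrix g *v x = g x" for x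
    using matrix_works lin by blast+
  have "matrix f ** matrix g = mat 1" "matrix g ** matrix f = mat 1"
    by (simp_all add: matrix_eq matrix_vector_mul_assoc[symmetric] mf mg inverse)
  then have "matrix f \<in> OL"
    using int_mat_matrix[of f, OF integral(1)] int_mat_matrix[of g, OF integral(2)] isometry
    by (auto simp: OL_def mf intro!: exI[of _ "matrix g"])
  then show ?thesis
    using stable spinor realify_matrix[OF real] by (auto simp: OtplusL_def OtL_def mf)
qed

text \<open>\<open>E(e,u) = E(e,u+z) E(e,-z)\<close>, and \<open>E(e,v)\<close> is the product of the reflections in
  \<open>v\<close> and \<open>v - (v,v)/2 e\<close>, two vectors of equal norm; so the spinor norm of \<open>E(e,u)\<close> is a
  square. The auxiliary \<open>z\<close> is needed because \<open>u\<close> itself may be isotropic.\<close>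

lemma spinor_one_eichler:
  fixes e u z :: "real^6"
  assumes ee: "lform e e = 0" and eu: "lform e u = 0" and ez: "lform e z = 0"
    and zz: "lform z z \<noteq> 0" and uz: "lform (u + z) (u + z) \<noteq> 0"
  shows "spinor_one (matrix (eichler e u))"
proof -
  have euz: "lform e (u + z) = 0" and ez': "lform e (- z) = 0" and zz': "lform (- z) (- z) \<noteq> 0"
    using eu ez zz by simp_all
  define a b where "a = - lform (u + z) (u + z) / 2" "b = - lform (- z) (- z) / 2"
  define ws where "ws = [u + z, u + z + a *s e, - z, - z + b *s e]"
  have norms: "lform (u + z + a *s e) (u + z + a *s e) = lform (u + z) (u + z)"
    "lform (- z + b *s e) (- z + b *s e) = lform (- z) (- z)"
    using lform_add_smult_isotropic ee euz ez' lform_commute by metis+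
  have "eichler e u x = eichler e (u + z) (eichler e (- z) x)" for x
    using eichler_eichler[OF ee euz ez'] by simp
  also have "\<dots>x = refl_prod ws x" for x
    unfolding ws_def refl_prod_def a_b_def
    using eichler_eq_reflection_reflection[OF ee euz uz] eichler_eq_reflection_reflection[OF ee ez' zz']
    by (simp add: reflR_eq_reflection)
  finally have "(*v) (matrix (eichler e u)) = refl_prod ws"
    by (simp add: fun_eq_iff matrix_works[OF linear_eichler])
  moreover have "\<forall>w\<in>set ws. lform w w \<noteq> 0"
    unfolding ws_def list.set ball_simps norms using uz zz' by blast
  moreover have "(\<Prod>w\<leftarrow>ws. - lform w w / 2) = a * (a * (b * (b * 1)))"
    unfolding ws_def by (simp only: list.map prod_list.Cons prod_list.Nil norms a_b_def[symmetric])
  moreover have "a * (a * (b * (b * 1))) = (a * b)^2"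
    by (simp add: power2_eq_square)
  ultimately show ?thesis
    unfolding spinor_one_iff using uz zz' a_b_def by (intro exI[of _ ws]) simp
qed

lemma eichler_in_OtplusL:
  fixes e u z :: "rat^6"
  assumes el: "e \<in> latL" and ul: "u \<in> latL" and ee: "lform e e = 0" and eu: "lform e u = 0"
    and ez: "lform e z = 0" and zz: "lform z z \<noteq> 0" and uz: "lform (u + z) (u + z) \<noteq> 0"
  shows "matrix (eichler e u) \<in> OtplusL"
proof (rule matrix_in_OtplusL[where g = "eichler e (- u)" and fR = "eichler (of_rat_vec e) (of_rat_vec u)"])
  show "Vector_Spaces.linear (*s) (*s) (eichler e u)" "Vector_Spaces.linear (*s) (*s) (eichler e (- u))"
    "Vector_Spaces.linear (*s) (*s) (eichler (of_rat_vec e) (of_rat_vec u))"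
    by (rule linear_eichler)+
  have eu': "lform e (- u) = 0"
    using eu by simp
  show "eichler e u (eichler e (- u) x) = x" "eichler e (- u) (eichler e u x) = x" for x
    by (simp_all add: eichler_eichler[OF ee eu eu'] eichler_eichler[OF ee eu' eu] eichler_0)
  have "eichler e v x \<in> latL" if "v \<in> latL" "x \<in> latL" for v x
    unfolding eichler_def using that el
    by (intro latL_diff latL_add latL_smult lform_Ints Ints_mult lform_self_half_Ints) auto
  then show "eichler e u (axis j 1) \<in> latL" "eichler e (- u) (axis j 1) \<in> latL" for j
    using ul latL_minus latL_axis by auto
  show "lform (eichler e u x) (eichler e u y) = lform x y" for x y
    by (rule lform_eichler[OF ee eu])
  show "eichler e u x - x \<in> latL" if "x \<in> dualL" for x
  proof -
    have "eichler e u x - x = lform x u *s e - lform x e *s u - (lform u u / 2 * lform x e) *s e"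
      by (simp add: eichler_def algebra_simps)
    moreover have "lform x u \<in> \<int>" "lform x e \<in> \<int>"
      using that ul el by (auto simp: dualL_def)
    moreover have "lform u u / 2 * lform x e \<in> \<int>"
      using lform_self_half_Ints[OF ul] \<open>lform x e \<in> \<int>\<close> by (rule Ints_mult)
    ultimately show ?thesis
      using el ul by (metis latL_diff latL_smult)
  qed
  show "eichler (of_rat_vec e) (of_rat_vec u) (axis j 1) = of_rat_vec (eichler e u (axis j 1))" for j
    by (simp add: of_rat_vec_eichler)
  have "lform (of_rat_vec e) (of_rat_vec e) = 0" "lform (of_rat_vec e) (of_rat_vec u) = 0"
    "lform (of_rat_vec e) (of_rat_vec z) = 0" "lform (of_rat_vec z) (of_rat_vec z) \<noteq> 0"
    "lform (of_rat_vec u + of_rat_vec z) (of_rat_vec u + of_rat_vec z) \<noteq> 0"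
    using ee eu ez zz uz by (metis of_rat_lform of_rat_eq_0_iff of_rat_vec_add)+
  then show "spinor_one (matrix (eichler (of_rat_vec e) (of_rat_vec u)))"
    by (rule spinor_one_eichler)
qed

lemma reflection_in_OtplusL:
  assumes wl: "w \<in> latL" and ww: "lform w w = -2"
  shows "matrix (reflection w) \<in> OtplusL"
proof (rule matrix_in_OtplusL[where g = "reflection w" and fR = "reflection (of_rat_vec w)"])
  show "Vector_Spaces.linear (*s) (*s) (reflection w)" "Vector_Spaces.linear (*s) (*s) (reflection w)"
    "Vector_Spaces.linear (*s) (*s) (reflection (of_rat_vec w))"
    by (rule linear_reflection)+
  show "reflection w (reflection w x) = x" "reflection w (reflection w x) = x" for x
    by (rule reflection_reflection, simp add: ww)+
  have r: "reflection w x = x + lform x w *s w" for x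
    by (simp add: reflection_def ww)
  show "reflection w (axis j 1) \<in> latL" "reflection w (axis j 1) \<in> latL" for j
    unfolding r using wl latL_axis by (auto intro!: latL_add latL_smult lform_Ints)
  show "lform (reflection w x) (reflection w y) = lform x y" for x y
    by (rule lform_reflection) (simp add: ww)
  show "reflection w x - x \<in> latL" if "x \<in> dualL" for x
    unfolding r using that wl by (auto simp: dualL_def intro!: latL_smult)
  show "reflection (of_rat_vec w) (axis j 1) = of_rat_vec (reflection w (axis j 1))" for j
    by (simp add: of_rat_vec_reflection)
  have "lform (of_rat_vec w) (of_rat_vec w) = -2"
    using ww of_rat_lform[of w w] by simp
  then show "spinor_one (matrix (reflection (of_rat_vec w)))"
    unfolding spinor_one_iff
    by (intro exI[of _ "[of_rat_vec w]"])
      (simp add: matrix_works[OF linear_reflection] refl_prod_def reflR_eq_reflection fun_eq_iff)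
qed

section \<open>Normal forms of isotropic lattice vectors\<close>

definition ivec :: "int \<Rightarrow> int \<Rightarrow> int \<Rightarrow> int \<Rightarrow> int \<Rightarrow> int \<Rightarrow> rat^6" where
  "ivec a b c d p q = vec6 (of_int a) (of_int b) (of_int c) (of_int d) (of_int p) (of_int q)"

lemma latL_obtain_ivec:
  assumes "v \<in> latL"
  obtains a b c d p q where "v = ivec a b c d p q"
proof -
  obtain a b c d p q where "v$0 = of_int a" "v$1 = of_int b" "v$2 = of_int c" "v$3 = of_int d"
    "v$4 = of_int p" "v$5 = of_int q"
    using assms by (auto simp: latL_iff elim!: Ints_cases)
  then show ?thesis
    using that by (auto simp: ivec_def vec6_eq_iff)
qed

lemma lform_ivec_self:
  "lform (ivec a b c d p q) (ivec a b c d p q) = 2 * of_int (a*b + c*d - 3*p^2 - q^2)"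
  by (simp add: ivec_def algebra_simps power2_eq_square)

lemma isotropic_ivec_iff:
  "lform (ivec a b c d p q) (ivec a b c d p q) = 0 \<longleftrightarrow> a*b + c*d = 3*p^2 + q^2"
  unfolding lform_ivec_self by (simp only: mult_eq_0_iff of_int_eq_0_iff) auto

abbreviation "e0 \<equiv> vec6 (1::rat) 0 0 0 0 0"
abbreviation "e2 \<equiv> vec6 (0::rat) 0 1 0 0 0"
abbreviation "w1 \<equiv> vec6 (0::rat) 0 2 2 1 1"

lemma ivec_e0: "ivec g 0 0 0 0 0 = of_int g *s e0"
  and ivec_e2: "ivec 0 0 g 0 0 0 = of_int g *s e2"
  and ivec_w1: "ivec 0 0 (2*g) (2*g) g g = of_int g *s w1"
  by (simp_all add: vec6_arith ivec_def)

definition reach :: "rat^6 \<Rightarrow> rat^6 \<Rightarrow> bool" where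
  "reach v w \<longleftrightarrow> (\<exists>M\<in>OtplusL. M *v v = w)"

definition reach_e0 :: "rat^6 \<Rightarrow> rat^6 \<Rightarrow> bool" where
  "reach_e0 v w \<longleftrightarrow> (\<exists>M\<in>OtplusL. M *v v = w \<and> M *v e0 = e0)"

lemma reach_refl: "reach v v"
  unfolding reach_def using OtplusL_mat_1 by force

lemma reach_trans: "reach u v \<Longrightarrow> reach v w \<Longrightarrow> reach u w"
  unfolding reach_def by (metis OtplusL_mult matrix_vector_mul_assoc)

lemma reach_e0_refl: "reach_e0 v v"
  unfolding reach_e0_def using OtplusL_mat_1 by force

lemma reach_e0_trans: "reach_e0 u v \<Longrightarrow> reach_e0 v w \<Longrightarrow> reach_e0 u w"
  unfolding reach_e0_def by (metis OtplusL_mult matrix_vector_mul_assoc)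

lemma reach_e0_imp_reach: "reach_e0 u v \<Longrightarrow> reach u v"
  unfolding reach_e0_def reach_def by blast

lemma reach_lform: "reach v w \<Longrightarrow> lform w w = lform v v"
  unfolding reach_def using OtplusL_subset_OL OL_lform by blast

lemma reach_eichler:
  assumes "e \<in> latL" "u \<in> latL" "lform e e = 0" "lform e u = 0"
    "lform e z = 0" "lform z z \<noteq> 0" "lform (u + z) (u + z) \<noteq> 0"
  shows "reach v (eichler e u v)"
  unfolding reach_def using eichler_in_OtplusL[OF assms] matrix_works[OF linear_eichler] by blast

lemma reach_e0_eichler:
  assumes "e \<in> latL" "u \<in> latL" "lform e e = 0" "lform e u = 0"
    "lform e z = 0" "lform z z \<noteq> 0" "lform (u + z) (u + z) \<noteq> 0" "eichler e u e0 = e0"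
  shows "reach_e0 v (eichler e u v)"
  unfolding reach_e0_def using eichler_in_OtplusL[OF assms(1-7)] matrix_works[OF linear_eichler] assms(8)
  by metis

lemma reach_eichler_e0_e2: "reach (ivec a b c d p q) (ivec (a + k*d) b (c - k*b) d p q)"
proof -
  have "reach (ivec a b c d p q) (eichler (vec6 1 0 0 0 0 0) (vec6 0 0 (of_int k) 0 0 0) (ivec a b c d p q))"
    by (rule reach_eichler[where z = "vec6 0 0 0 0 0 1"]) (simp_all add: vec6_arith vec6_in_latL)
  then show ?thesis
    by (simp add: vec6_arith eichler_def ivec_def algebra_simps)
qed

lemma reach_eichler_e0_e3: "reach (ivec a b c d p q) (ivec (a + k*c) b c (d - k*b) p q)"
proof -
  have "reach (ivec a b c d p q) (eichler (vec6 1 0 0 0 0 0) (vec6 0 0 0 (of_int k) 0 0) (ivec a b c d p q))"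
    by (rule reach_eichler[where z = "vec6 0 0 0 0 0 1"]) (simp_all add: vec6_arith vec6_in_latL)
  then show ?thesis
    by (simp add: vec6_arith eichler_def ivec_def algebra_simps)
qed

lemma reach_eichler_e1_e2: "reach (ivec a b c d p q) (ivec a (b + k*d) (c - k*a) d p q)"
proof -
  have "reach (ivec a b c d p q) (eichler (vec6 0 1 0 0 0 0) (vec6 0 0 (of_int k) 0 0 0) (ivec a b c d p q))"
    by (rule reach_eichler[where z = "vec6 0 0 0 0 0 1"]) (simp_all add: vec6_arith vec6_in_latL)
  then show ?thesis
    by (simp add: vec6_arith eichler_def ivec_def algebra_simps)
qed

lemma reach_eichler_e1_e3: "reach (ivec a b c d p q) (ivec a (b + k*c) c (d - k*a) p q)"
proof -
  have "reach (ivec a b c d p q) (eichler (vec6 0 1 0 0 0 0) (vec6 0 0 0 (of_int k) 0 0) (ivec a b c d p q))"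
    by (rule reach_eichler[where z = "vec6 0 0 0 0 0 1"]) (simp_all add: vec6_arith vec6_in_latL)
  then show ?thesis
    by (simp add: vec6_arith eichler_def ivec_def algebra_simps)
qed

lemma reach_e0_eichler_e2_e4:
  "reach_e0 (ivec a b c d p q) (ivec a b (c - 6*k*p + 3*k^2*d) d (p - k*d) q)"
proof -
  have "reach_e0 (ivec a b c d p q) (eichler (vec6 0 0 1 0 0 0) (vec6 0 0 0 0 (of_int k) 0) (ivec a b c d p q))"
  proof (rule reach_e0_eichler[where z = "vec6 0 0 0 0 0 1"])
    have "6 * (of_int k * of_int k) + (2::rat) > 0"
      by (simp add: add_nonneg_pos)
    then show "lform (vec6 0 0 0 0 (of_int k) 0 + vec6 0 0 0 0 0 1 :: rat^6)
        (vec6 0 0 0 0 (of_int k) 0 + vec6 0 0 0 0 0 1) \<noteq> 0"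
      by (simp add: vec6_arith algebra_simps)
  qed (simp_all add: vec6_arith vec6_in_latL eichler_def)
  then show ?thesis
    by (simp add: vec6_arith eichler_def ivec_def algebra_simps power2_eq_square)
qed

lemma reach_e0_eichler_e2_e5:
  "reach_e0 (ivec a b c d p q) (ivec a b (c - 2*k*q + k^2*d) d p (q - k*d))"
proof -
  have "reach_e0 (ivec a b c d p q) (eichler (vec6 0 0 1 0 0 0) (vec6 0 0 0 0 0 (of_int k)) (ivec a b c d p q))"
  proof (rule reach_e0_eichler[where z = "vec6 0 0 0 0 1 0"])
    have "2 * (of_int k * of_int k) + (6::rat) > 0"
      by (simp add: add_nonneg_pos)
    then show "lform (vec6 0 0 0 0 0 (of_int k) + vec6 0 0 0 0 1 0 :: rat^6)
        (vec6 0 0 0 0 0 (of_int k) + vec6 0 0 0 0 1 0) \<noteq> 0"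
      by (simp add: vec6_arith algebra_simps)
  qed (simp_all add: vec6_arith vec6_in_latL eichler_def)
  then show ?thesis
    by (simp add: vec6_arith eichler_def ivec_def algebra_simps power2_eq_square)
qed

lemma reach_e0_swap_23: "reach_e0 (ivec a b c d p q) (ivec a b d c p q)"
proof -
  have "matrix (reflection (vec6 0 0 1 (-1) 0 0)) \<in> OtplusL"
    by (rule reflection_in_OtplusL) (simp_all add: vec6_in_latL)
  moreover have "reflection (vec6 0 0 1 (-1) 0 0) (ivec a b c d p q) = ivec a b d c p q"
    by (simp add: vec6_arith reflection_def ivec_def field_simps)
  moreover have "reflection (vec6 0 0 1 (-1) 0 0) e0 = e0"
    by (simp add: reflection_def)
  ultimately show ?thesis
    unfolding reach_e0_def by (metis matrix_works[OF linear_reflection])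
qed

lemma reach_swap_hyperbolic_planes: "reach (ivec a b c d p q) (ivec c d (-a) (-b) p q)"
proof -
  have "reach (ivec a b c d p q) (ivec (a+c) b c (d-b) p q)"
    using reach_eichler_e0_e3[of a b c d p q 1] by simp
  moreover have "reach (ivec (a+c) b c (d-b) p q) (ivec (a+c) d (-a) (d-b) p q)"
    using reach_eichler_e1_e2[of "a+c" b c "d-b" p q 1] by simp
  moreover have "reach (ivec (a+c) d (-a) (d-b) p q) (ivec c d (-a) (-b) p q)"
    using reach_eichler_e0_e3[of "a+c" d "-a" "d-b" p q 1] by simp
  ultimately show ?thesis
    by (metis reach_trans)
qed

lemma reach_swap_hyperbolic_planes': "reach (ivec a b c d p q) (ivec (-d) (-c) b a p q)"
proof -
  have "reach (ivec a b c d p q) (ivec (a-d) b (c+b) d p q)"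
    using reach_eichler_e0_e2[of a b c d p q "-1"] by simp
  moreover have "reach (ivec (a-d) b (c+b) d p q) (ivec (a-d) (-c) (c+b) a p q)"
    using reach_eichler_e1_e3[of "a-d" b "c+b" d p q "-1"] by simp
  moreover have "reach (ivec (a-d) (-c) (c+b) a p q) (ivec (-d) (-c) b a p q)"
    using reach_eichler_e0_e2[of "a-d" "-c" "c+b" a p q "-1"] by simp
  ultimately show ?thesis
    by (metis reach_trans)
qed

lemma reach_23_zero_of_nonzero:
  "a \<noteq> 0 \<Longrightarrow> \<exists>a' b'. reach (ivec a b c d p q) (ivec a' b' 0 0 p q)"
proof (induct "nat \<bar>a\<bar>" arbitrary: a b c d rule: less_induct)
  case less
  define k r where "k = c div a" "r = c mod a"
  have r: "c - k * a = r"
    unfolding k_r_def by (simp add: minus_div_mult_eq_mod)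
  have "nat \<bar>r\<bar> < nat \<bar>a\<bar>"
    unfolding k_r_def using less.prems by (simp add: abs_mod_less)
  have step1: "reach (ivec a b c d p q) (ivec a (b + k*d) r d p q)"
    using reach_eichler_e1_e2[of a b c d p q k] r by simp
  show ?case
  proof (cases "r = 0")
    case False
    have "reach (ivec a (b + k*d) r d p q) (ivec r d (-a) (-(b+k*d)) p q)"
      by (rule reach_swap_hyperbolic_planes)
    moreover obtain a' b' where "reach (ivec r d (-a) (-(b+k*d)) p q) (ivec a' b' 0 0 p q)"
      using less.hyps \<open>nat \<bar>r\<bar> < nat \<bar>a\<bar>\<close> False by blast
    ultimately show ?thesis
      using step1 reach_trans by blast
  next
    case True
    define k' s where "k' = d div a" "s = d mod a"
    have s: "d - k' * a = s"
      unfolding k'_s_def by (simp add: minus_div_mult_eq_mod)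
    have "nat \<bar>-s\<bar> < nat \<bar>a\<bar>"
      unfolding k'_s_def using less.prems by (simp add: abs_mod_less)
    have step2: "reach (ivec a (b + k*d) r d p q) (ivec a (b + k*d) 0 s p q)"
      using reach_eichler_e1_e3[of a "b + k*d" r d p q k'] s True by simp
    show ?thesis
    proof (cases "s = 0")
      case True
      then show ?thesis
        using step1 step2 reach_trans by blast
    next
      case False
      have "reach (ivec a (b + k*d) 0 s p q) (ivec (-s) 0 (b + k*d) a p q)"
        using reach_swap_hyperbolic_planes'[of a "b + k*d" 0 s p q] by simp
      moreover obtain a' b' where "reach (ivec (-s) 0 (b + k*d) a p q) (ivec a' b' 0 0 p q)"
        using less.hyps \<open>nat \<bar>-s\<bar> < nat \<bar>a\<bar>\<close> False by (metis neg_equal_0_iff_equal)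
      ultimately show ?thesis
        using step1 step2 reach_trans by blast
    qed
  qed
qed

lemma reach_23_zero: "\<exists>a' b'. reach (ivec a b c d p q) (ivec a' b' 0 0 p q)"
proof -
  consider "a \<noteq> 0" | "a = 0" "c \<noteq> 0" | "a = 0" "c = 0" "d = 0" | "a = 0" "c = 0" "d \<noteq> 0"
    by blast
  then show ?thesis
  proof cases
    case 1
    then show ?thesis
      by (rule reach_23_zero_of_nonzero)
  next
    case 2
    have "reach (ivec a b c d p q) (ivec c d (-a) (-b) p q)"
      by (rule reach_swap_hyperbolic_planes)
    then show ?thesis
      using reach_23_zero_of_nonzero[of c d "-a" "-b" p q] reach_trans 2 by blast
  next
    case 3
    then show ?thesis
      using reach_refl by blast
  next
    case 4
    have "reach (ivec a b c d p q) (ivec (-d) (-c) b a p q)"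
      by (rule reach_swap_hyperbolic_planes')
    moreover have "-d \<noteq> 0"
      using 4 by simp
    ultimately show ?thesis
      using reach_23_zero_of_nonzero[of "-d" "-c" b a p q] reach_trans by blast
  qed
qed

lemma exists_centered_remainder: "(d::int) \<noteq> 0 \<Longrightarrow> \<exists>k. 2 * \<bar>p - k*d\<bar> \<le> \<bar>d\<bar>"
proof -
  assume d: "d \<noteq> 0"
  define r where "r = p mod d"
  have pr: "p - (p div d) * d = r"
    unfolding r_def by (simp add: minus_div_mult_eq_mod)
  show ?thesis
  proof (cases "2 * \<bar>r\<bar> \<le> \<bar>d\<bar>")
    case True
    then show ?thesis
      using pr by metis
  next
    case False
    have "0 < d \<Longrightarrow> 0 \<le> r \<and> r < d" "d < 0 \<Longrightarrow> d < r \<and> r \<le> 0"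
      unfolding r_def by simp_all
    then have "2 * \<bar>p - (p div d + 1) * d\<bar> \<le> \<bar>d\<bar>"
      using False d pr by (simp add: algebra_simps) (smt (verit))
    then show ?thesis
      by blast
  qed
qed

lemma reach_e0_reduce_45:
  assumes "d \<noteq> 0"
  obtains c' p' q' where "reach_e0 (ivec 0 0 c d p q) (ivec 0 0 c' d p' q')"
    "4 * p'^2 \<le> d^2" "4 * q'^2 \<le> d^2" "c' * d - 3 * p'^2 - q'^2 = c * d - 3 * p^2 - q^2"
proof -
  have square_bound: "4 * x^2 \<le> d^2" if "2 * \<bar>x\<bar> \<le> \<bar>d\<bar>" for x
  proof -
    have "\<bar>2 * x\<bar> \<le> \<bar>d\<bar>"
      using that by (simp add: abs_mult)
    then show ?thesis
      by (simp add: abs_le_square_iff power_mult_distrib)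
  qed
  obtain k1 k2 where k: "2 * \<bar>p - k1*d\<bar> \<le> \<bar>d\<bar>" "2 * \<bar>q - k2*d\<bar> \<le> \<bar>d\<bar>"
    using exists_centered_remainder[OF assms] by metis
  define c1 where "c1 = c - 6*k1*p + 3*k1^2*d"
  have "reach_e0 (ivec 0 0 c d p q) (ivec 0 0 c1 d (p - k1*d) q)"
    unfolding c1_def by (rule reach_e0_eichler_e2_e4)
  moreover have "reach_e0 (ivec 0 0 c1 d (p - k1*d) q)
      (ivec 0 0 (c1 - 2*k2*q + k2^2*d) d (p - k1*d) (q - k2*d))"
    by (rule reach_e0_eichler_e2_e5)
  moreover have "(c1 - 2*k2*q + k2^2*d) * d - 3 * (p - k1*d)^2 - (q - k2*d)^2 = c * d - 3 * p^2 - q^2"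
    unfolding c1_def by (simp add: algebra_simps power2_eq_square)
  ultimately show ?thesis
    using that square_bound k reach_e0_trans by blast
qed

lemma reach_e0_w1_multiple:
  assumes "4 * p^2 = d^2" "4 * q^2 = d^2"
  shows "\<exists>g. reach_e0 (ivec 0 0 d d p q) (ivec 0 0 (2*g) (2*g) g g)"
proof -
  have "d^2 = (2*p)^2" "d^2 = (2*q)^2"
    using assms by (simp_all add: power_mult_distrib)
  then have "d = 2*p \<or> d = -(2*p)" "d = 2*q \<or> d = -(2*q)"
    unfolding power2_eq_iff .
  then have "\<exists>g. d = 2*g \<and> (p = g \<or> p = -g) \<and> (q = g \<or> q = -g)"
    by presburger
  then obtain g where g: "d = 2*g" "p = g \<or> p = -g" "q = g \<or> q = -g"
    by blast
  have "reach_e0 (ivec 0 0 (2*g) (2*g) p q) (ivec 0 0 (2*g) (2*g) g q)"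
    using g(2) reach_e0_refl reach_e0_eichler_e2_e4[of 0 0 "2*g" "2*g" p q "-1"]
    by (auto simp: algebra_simps)
  moreover have "reach_e0 (ivec 0 0 (2*g) (2*g) g q) (ivec 0 0 (2*g) (2*g) g g)"
    using g(3) reach_e0_refl reach_e0_eichler_e2_e5[of 0 0 "2*g" "2*g" g q "-1"]
    by (auto simp: algebra_simps)
  ultimately show ?thesis
    using g(1) reach_e0_trans by blast
qed

text \<open>Descent on \<open>\<bar>d\<bar>\<close>: after reducing \<open>p, q\<close> modulo \<open>d\<close>, the relation
  \<open>c d = 3 p\<^sup>2 + q\<^sup>2 \<le> d\<^sup>2\<close> forces \<open>\<bar>c\<bar> < \<bar>d\<bar>\<close> unless \<open>c = d = \<plusminus>2p = \<plusminus>2q\<close>.\<close>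

lemma reach_e0_normal_form:
  "c * d = 3 * p^2 + q^2 \<Longrightarrow>
   \<exists>g. reach_e0 (ivec 0 0 c d p q) (ivec 0 0 g 0 0 0) \<or> reach_e0 (ivec 0 0 c d p q) (ivec 0 0 (2*g) (2*g) g g)"
proof (induct "nat \<bar>d\<bar>" arbitrary: c d p q rule: less_induct)
  case less
  show ?case
  proof (cases "d = 0")
    case True
    then have "p = 0" "q = 0"
      using less.prems by (simp_all add: add_nonneg_eq_0_iff)
    then have "reach_e0 (ivec 0 0 c d p q) (ivec 0 0 c 0 0 0)"
      using True reach_e0_refl by simp
    then show ?thesis
      by blast
  next
    case False
    obtain c' p' q' where red: "reach_e0 (ivec 0 0 c d p q) (ivec 0 0 c' d p' q')"
        "4 * p'^2 \<le> d^2" "4 * q'^2 \<le> d^2"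
        and invariant: "c' * d - 3 * p'^2 - q'^2 = c * d - 3 * p^2 - q^2"
      by (rule reach_e0_reduce_45[OF False])
    have iso: "c' * d = 3 * p'^2 + q'^2"
      using invariant less.prems by linarith
    show ?thesis
    proof (cases "\<bar>c'\<bar> < \<bar>d\<bar>")
      case True
      moreover have "d * c' = 3 * p'^2 + q'^2"
        using iso by (simp add: mult.commute)
      ultimately obtain g where "reach_e0 (ivec 0 0 d c' p' q') (ivec 0 0 g 0 0 0)
          \<or> reach_e0 (ivec 0 0 d c' p' q') (ivec 0 0 (2*g) (2*g) g g)"
        using less.hyps[of c'] by fastforce
      then show ?thesis
        using red(1) reach_e0_swap_23 reach_e0_trans by metis
    next
      case False
      have "d^2 \<le> c' * d"
      proof -
        have "\<bar>d\<bar> \<le> \<bar>c'\<bar>"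
          using False by simp
        then have "\<bar>d\<bar> * \<bar>d\<bar> \<le> \<bar>c'\<bar> * \<bar>d\<bar>"
          by (rule mult_right_mono) simp
        moreover have "c' * d \<ge> 0"
          using iso by simp
        ultimately show ?thesis
          by (simp add: power2_eq_square abs_mult[symmetric])
      qed
      then have squares: "4 * p'^2 = d^2" "4 * q'^2 = d^2" "c' * d = d * d"
        using iso red(2,3) by (simp_all add: power2_eq_square)
      then have "c' = d"
        using \<open>d \<noteq> 0\<close> by simp
      then show ?thesis
        using red(1) reach_e0_w1_multiple[OF squares(1,2)] reach_e0_trans by blast
    qed
  qed
qed

lemma reach_isotropic_normal_form:
  assumes "u \<in> latL" "lform u u = 0"
  shows "\<exists>g. reach u (of_int g *s e0) \<or> reach u (of_int g *s w1)"
proof -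
  obtain a b c d p q where u: "u = ivec a b c d p q"
    using latL_obtain_ivec assms(1) by blast
  obtain a' b' where "reach u (ivec a' b' 0 0 p q)"
    using reach_23_zero u by blast
  moreover have "reach (ivec a' b' 0 0 p q) (ivec 0 0 (-a') (-b') p q)"
    using reach_swap_hyperbolic_planes[of a' b' 0 0 p q] by simp
  ultimately have u': "reach u (ivec 0 0 (-a') (-b') p q)"
    by (rule reach_trans)
  then have "lform (ivec 0 0 (-a') (-b') p q) (ivec 0 0 (-a') (-b') p q) = 0"
    using reach_lform assms(2) by simp
  then have "(-a') * (-b') = 3*p^2 + q^2"
    unfolding isotropic_ivec_iff by simp
  then obtain g where "reach_e0 (ivec 0 0 (-a') (-b') p q) (ivec 0 0 g 0 0 0)
      \<or> reach_e0 (ivec 0 0 (-a') (-b') p q) (ivec 0 0 (2*g) (2*g) g g)"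
    using reach_e0_normal_form by blast
  then have "reach u (ivec 0 0 g 0 0 0) \<or> reach u (ivec 0 0 (2*g) (2*g) g g)"
    using u' reach_e0_imp_reach reach_trans by blast
  moreover have "reach (ivec 0 0 g 0 0 0) (ivec g 0 0 0 0 0)"
    using reach_swap_hyperbolic_planes[of 0 0 g 0 0 0] by simp
  ultimately have "reach u (ivec g 0 0 0 0 0) \<or> reach u (ivec 0 0 (2*g) (2*g) g g)"
    using reach_trans by blast
  then show ?thesis
    unfolding ivec_e0 ivec_w1 by blast
qed

section \<open>An invariant modulo 2\<close>

lemma of_int_half_Ints_iff: "(of_int a / 2 :: rat) \<in> \<int> \<longleftrightarrow> even a"
proof
  assume "(of_int a / 2 :: rat) \<in> \<int>"
  then obtain n where "(of_int a / 2 :: rat) = of_int n"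
    by (auto elim: Ints_cases)
  then have "(of_int a :: rat) = of_int (2 * n)"
    by (simp add: field_simps)
  then show "even a"
    by (simp only: of_int_eq_iff) simp
qed (auto elim!: evenE)

lemma half_ivec_in_latL_iff:
  "(1/2) *s ivec a b c d p q \<in> latL \<longleftrightarrow> even a \<and> even b \<and> even c \<and> even d \<and> even p \<and> even q"
  by (simp add: ivec_def latL_iff of_int_half_Ints_iff[symmetric])

lemma half_w1_notin_latL: "(1/2) *s w1 \<notin> latL"
  using half_ivec_in_latL_iff[of 0 0 2 2 1 1] by (simp add: ivec_def)

lemma half_w1_in_dualL: "(1/2) *s w1 \<in> dualL"
  by (simp add: dualL_def latL_iff lform_def)

lemma dualL_Ints: "x \<in> dualL \<Longrightarrow> x$0 \<in> \<int> \<and> x$1 \<in> \<int> \<and> x$2 \<in> \<int> \<and> x$3 \<in> \<int>"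
proof -
  assume "x \<in> dualL"
  then have "lform x (axis 1 1) \<in> \<int>" "lform x (axis 0 1) \<in> \<int>"
    "lform x (axis 3 1) \<in> \<int>" "lform x (axis 2 1) \<in> \<int>"
    unfolding dualL_def using latL_axis by blast+
  then show ?thesis
    by (simp add: lform_def axis_def)
qed

lemma span_e0_e2_coordinates:
  assumes "x \<in> vec.span {e0, e2}"
  shows "x$1 = 0 \<and> x$3 = 0 \<and> x$4 = 0 \<and> x$5 = 0"
proof -
  have "vec.subspace {x::rat^6. x$1 = 0 \<and> x$3 = 0 \<and> x$4 = 0 \<and> x$5 = 0}"
    by (auto simp: vec.subspace_def)
  then have "vec.span {e0, e2} \<subseteq> {x::rat^6. x$1 = 0 \<and> x$3 = 0 \<and> x$4 = 0 \<and> x$5 = 0}"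
    by (rule vec.span_minimal[rotated]) auto
  then show ?thesis
    using assms by auto
qed

lemma OL_image_w1_notin_span_e0_e2:
  assumes M: "M \<in> OL"
  shows "M *v w1 \<notin> vec.span {e0, e2}"
proof
  define x where "x = (1/2) *s (M *v w1)"
  assume "M *v w1 \<in> vec.span {e0, e2}"
  then have "x$1 = 0" "x$3 = 0" "x$4 = 0" "x$5 = 0"
    using span_e0_e2_coordinates by (auto simp: x_def)
  moreover have "x \<in> dualL"
    unfolding x_def vec.scale[symmetric] using OL_dualL[OF M half_w1_in_dualL] .
  ultimately have "x \<in> latL"
    using dualL_Ints by (simp add: latL_iff)
  obtain N where "N \<in> OL" "N ** M = mat 1"
    using OL_inverse[OF M] by blast
  then have "N *v x = (1/2) *s w1"
    by (simp add: x_def vec.scale matrix_vector_mul_assoc)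
  then show False
    using OL_latL[OF \<open>N \<in> OL\<close> \<open>x \<in> latL\<close>] half_w1_notin_latL by simp
qed

lemma isotropic_parity:
  assumes "even a" "even b" "even c" "even d" "a*b + c*d = 3*p^2 + (q::int)^2"
  shows "even p \<longleftrightarrow> even q"
proof -
  have "even (3*p^2 + q^2)"
    using assms by (metis even_add even_mult_iff)
  then show ?thesis
    by simp
qed

text \<open>The pairing with \<open>L\<close> makes the hyperbolic coordinates of \<open>u\<close> even; isotropy and
  \<open>u/2 \<notin> L\<close> then force its last two coordinates to be odd.\<close>

lemma congruent_w1_mod_2:
  assumes "u \<in> latL" "(1/2) *s u \<in> dualL" "(1/2) *s u \<notin> latL" "lform u u = 0"
  shows "(1/2) *s (u - w1) \<in> latL"
proof -
  obtain a b c d p q where u: "u = ivec a b c d p q"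
    using latL_obtain_ivec assms(1) by blast
  have evens: "even a" "even b" "even c" "even d"
    using dualL_Ints[OF assms(2)] by (simp_all add: u ivec_def of_int_half_Ints_iff)
  have "a*b + c*d = 3*p^2 + q^2"
    using assms(4) isotropic_ivec_iff u by simp
  then have "even p \<longleftrightarrow> even q"
    using isotropic_parity evens by blast
  moreover have "\<not> (even p \<and> even q)"
    using assms(3) evens by (simp add: u half_ivec_in_latL_iff)
  ultimately have "odd p" "odd q"
    by blast+
  moreover have "u - w1 = ivec a b (c - 2) (d - 2) (p - 1) (q - 1)"
    by (simp add: vec6_arith u ivec_def)
  ultimately show ?thesis
    using evens by (simp add: half_ivec_in_latL_iff)
qed

lemma OL_preimage_w1_congruent:
  assumes M: "M \<in> OL" and Mu: "M *v u = w1"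
  shows "(1/2) *s (u - w1) \<in> latL"
proof (rule congruent_w1_mod_2)
  obtain N where N: "N \<in> OL" "N ** M = mat 1"
    using OL_inverse[OF M] by blast
  then have u: "u = N *v w1"
    using Mu by (metis matrix_vector_mul_assoc matrix_vector_mul_lid)
  show "u \<in> latL"
    unfolding u using OL_latL[OF N(1)] by (simp add: latL_iff)
  show "(1/2) *s u \<in> dualL"
    unfolding u vec.scale[symmetric] using OL_dualL[OF N(1) half_w1_in_dualL] .
  show "(1/2) *s u \<notin> latL"
    using OL_latL[OF M, of "(1/2) *s u"] half_w1_notin_latL by (auto simp: vec.scale Mu)
  show "lform u u = 0"
    using OL_lform[OF M, of u u] Mu by simp
qed

lemma vec_span_singleton_smult: "s \<noteq> 0 \<Longrightarrow> vec.span {s *s v} = vec.span {v}"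
  using vec.span_image_scale[of "{v}" "\<lambda>_. s"] by simp

lemma vec_span_pair_smult: "s \<noteq> 0 \<Longrightarrow> vec.span {a, s *s v} = vec.span {a, v}"
proof -
  assume s: "s \<noteq> 0"
  have "v = (1/s) *s (s *s v)"
    using s by (simp add: vector_smult_assoc)
  then have "v \<in> vec.span {a, s *s v}"
    by (metis vec.span_base vec.span_scale insertI1 insertI2 insert_commute)
  moreover have "s *s v \<in> vec.span {a, v}"
    by (simp add: vec.span_base vec.span_scale)
  ultimately show ?thesis
    by (simp add: vec.span_eq vec.span_base)
qed

lemma vec_span_pair_diff_smult: "vec.span {a, v - k *s a} = vec.span {a, v}"
proof -
  have "v - k *s a \<in> vec.span {a, v}"
    by (simp add: vec.span_base vec.span_scale vec.span_diff)
  moreover have "v = (v - k *s a) + k *s a"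
    by simp
  then have "v \<in> vec.span {a, v - k *s a}"
    by (metis vec.span_add vec.span_scale vec.span_base insertI1 insertI2)
  ultimately show ?thesis
    by (simp add: vec.span_eq vec.span_base)
qed

lemma exists_common_denominator:
  fixes f :: "'a \<Rightarrow> rat"
  assumes "finite I"
  shows "\<exists>s. s \<in> \<int> \<and> s \<noteq> 0 \<and> (\<forall>i\<in>I. s * f i \<in> \<int>)"
  using assms
proof (induct I)
  case empty
  then show ?case
    by (intro exI[of _ 1]) simp
next
  case (insert i I)
  then obtain s where s: "s \<in> \<int>" "s \<noteq> 0" "\<forall>j\<in>I. s * f j \<in> \<int>"
    by blast
  obtain n d where q: "quotient_of (f i) = (n, d)"
    by (cases "quotient_of (f i)")
  have nd: "f i = of_int n / of_int d" "d > 0"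
    using quotient_of_div[OF q] quotient_of_denom_pos[OF q] by auto
  have "(s * of_int d) * f j \<in> \<int>" if "j \<in> I" for j
    using s(3) that by (metis Ints_mult Ints_of_int mult.assoc mult.commute)
  moreover have "s * of_int d * f i = s * of_int n"
    using nd by simp
  ultimately show ?case
    using s nd by (intro exI[of _ "s * of_int d"]) auto
qed

lemma exists_smult_in_latL: "\<exists>s::rat. s \<noteq> 0 \<and> s *s v \<in> latL"
  using exists_common_denominator[of UNIV "\<lambda>i. v$i"] by (auto simp: latL_def)

lemma isotropic_span:
  assumes B: "\<forall>a\<in>B. \<forall>b\<in>B. lform a b = 0" and x: "x \<in> vec.span B" and y: "y \<in> vec.span B"
  shows "lform x y = 0"
proof -
  have "vec.subspace {x. \<forall>b\<in>B. lform x b = 0}"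
    by (auto simp: vec.subspace_def)
  then have "vec.span B \<subseteq> {x. \<forall>b\<in>B. lform x b = 0}"
    by (rule vec.span_minimal[rotated]) (use B in auto)
  moreover have "vec.subspace {y. \<forall>x\<in>vec.span B. lform x y = 0}"
    by (auto simp: vec.subspace_def)
  ultimately have "vec.span B \<subseteq> {y. \<forall>x\<in>vec.span B. lform x y = 0}"
    by (intro vec.span_minimal[rotated]) auto
  then show ?thesis
    using x y by auto
qed

lemma tiso_span:
  assumes "vec.independent B" "card B = k" "\<forall>a\<in>B. \<forall>b\<in>B. lform a b = 0"
  shows "tiso k (vec.span B)"
  using assms isotropic_span unfolding tiso_def
  by (auto simp: vec.dim_span_eq_card_independent vec.dim_eq_card_independent)

lemma tiso_1_obtain_span:
  assumes "tiso 1 l"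
  obtains v where "v \<noteq> 0" "l = vec.span {v}"
proof -
  have l: "vec.subspace l" "vec.dim l = 1"
    using assms by (auto simp: tiso_def)
  obtain B where B: "B \<subseteq> l" "vec.independent B" "l \<subseteq> vec.span B" "card B = vec.dim l"
    using vec.basis_exists by blast
  then obtain v where v: "B = {v}"
    using l card_1_singletonE by metis
  then have "v \<noteq> 0"
    using B(2) vec.dependent_zero by blast
  moreover have "l = vec.span {v}"
    using vec.span_subspace[OF B(1) B(3) l(1)] v by simp
  ultimately show ?thesis
    by (rule that)
qed

lemma tiso_2_exists_notin_span:
  assumes "tiso 2 P"
  obtains y where "y \<in> P" "y \<notin> vec.span {u}"
proof -
  have "\<not> P \<subseteq> vec.span {u}"
  proof
    assume "P \<subseteq> vec.span {u}"
    then have "vec.dim P \<le> card {u}"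
      by (rule vec.dim_le_card) simp
    then show False
      using assms by (simp add: tiso_def)
  qed
  then show ?thesis
    using that by blast
qed

lemma tiso_image:
  assumes "M \<in> OL" "tiso k S"
  shows "tiso k ((\<lambda>x. M *v x) ` S)"
proof -
  obtain N where N: "N ** M = mat 1"
    using OL_inverse[OF assms(1)] by blast
  then have "inj ((*v) M)"
    by (metis inj_on_inverseI matrix_vector_mul_assoc matrix_vector_mul_lid)
  then have "vec.dim ((*v) M ` S) = vec.dim S"
    by (intro vec.dim_image_eq) (auto intro: inj_on_subset)
  moreover have "vec.subspace ((*v) M ` S)"
    using assms(2) vec.subspace_image by (auto simp: tiso_def)
  ultimately show ?thesis
    using assms OL_lform by (auto simp: tiso_def)
qed

lemma OL_mult_vec_nonzero:
  assumes "M \<in> OL" "u \<noteq> 0"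
  shows "M *v u \<noteq> 0"
proof
  assume "M *v u = 0"
  obtain N where "N ** M = mat 1"
    using OL_inverse[OF assms(1)] by blast
  then have "u = N *v (M *v u)"
    by (simp add: matrix_vector_mul_assoc)
  then show False
    using \<open>M *v u = 0\<close> assms(2) by simp
qed

lemma image_mult_vec_inverse: "N ** M = mat 1 \<Longrightarrow> (\<lambda>x. N *v x) ` (\<lambda>x. M *v x) ` S = S"
  by (simp add: image_image matrix_vector_mul_assoc)

section \<open>Classification of isotropic lines and planes\<close>

lemma line_classification:
  assumes "tiso 1 l"
  shows "\<exists>N\<in>OtplusL. l = (\<lambda>x. N *v x) ` vec.span {e0} \<or> l = (\<lambda>x. N *v x) ` vec.span {w1}"
proof -
  obtain v where v: "v \<noteq> 0" "l = vec.span {v}"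
    using tiso_1_obtain_span assms by blast
  obtain s where s: "s \<noteq> 0" "s *s v \<in> latL"
    using exists_smult_in_latL by blast
  define u where "u = s *s v"
  have u: "u \<noteq> 0" "l = vec.span {u}" "u \<in> latL"
    using s v by (simp_all add: u_def vec_span_singleton_smult)
  have "lform u u = 0"
    using assms v by (auto simp: tiso_def u_def vec.span_base)
  then obtain g t where "reach u (of_int g *s t)" and t: "t = e0 \<or> t = w1"
    using reach_isotropic_normal_form u(3) by blast
  then obtain M where M: "M \<in> OtplusL" "M *v u = of_int g *s t"
    by (auto simp: reach_def)
  have "of_int g \<noteq> (0::rat)"
    using OL_mult_vec_nonzero[of M u] OtplusL_subset_OL M u(1) by auto
  have "(\<lambda>x. M *v x) ` l = vec.span {M *v u}"
    using vec.span_image[of M "{u}"] u(2) by simp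
  also have "\<dots> = vec.span {t}"
    unfolding M(2) using \<open>of_int g \<noteq> 0\<close> by (rule vec_span_singleton_smult)
  finally have "(\<lambda>x. M *v x) ` l = vec.span {t}" .
  moreover obtain N where "N \<in> OtplusL" "N ** M = mat 1"
    using lattice_group_inverse[OF lattice_group_OtplusL M(1)] by blast
  ultimately show ?thesis
    using image_mult_vec_inverse[of N M l] t by metis
qed

lemma obtain_w1_congruent_multiple:
  assumes "x \<in> latL" "x \<noteq> 0" "lform x x = 0" "\<forall>g. \<not> reach x (of_int g *s e0)"
  obtains g where "g \<noteq> 0" "(1/2) *s ((1 / of_int g) *s x - w1) \<in> latL"
proof -
  obtain g where "reach x (of_int g *s w1)"
    using reach_isotropic_normal_form assms by blast
  then obtain M where M: "M \<in> OtplusL" "M *v x = of_int g *s w1"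
    by (auto simp: reach_def)
  then have g: "(of_int g :: rat) \<noteq> 0"
    using OL_mult_vec_nonzero[of M x] OtplusL_subset_OL assms(2) by auto
  then have "M *v ((1 / of_int g) *s x) = w1"
    using M(2) by (simp add: vec.scale vector_smult_assoc)
  then have "(1/2) *s ((1 / of_int g) *s x - w1) \<in> latL"
    using OL_preimage_w1_congruent OtplusL_subset_OL M(1) by blast
  with g show ?thesis
    using that by simp
qed

definition minor2 :: "6 \<Rightarrow> 6 \<Rightarrow> rat^6 \<Rightarrow> rat^6 \<Rightarrow> rat" where
  "minor2 i j x y = x$i * y$j - x$j * y$i"

lemma exists_nonzero_minor2:
  assumes "u \<noteq> 0" "y \<notin> vec.span {u}"
  shows "\<exists>i j. minor2 i j u y \<noteq> 0"
proof (rule ccontr)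
  assume "\<not> ?thesis"
  then have D: "\<And>i j. u$i * y$j = u$j * y$i"
    by (auto simp: minor2_def)
  obtain i where i: "u$i \<noteq> 0"
    using assms(1) by (auto simp: vec_eq_iff)
  have "y = (y$i / u$i) *s u"
    using D[of i] i by (simp add: vec_eq_iff field_simps)
  then have "y \<in> vec.span {u}"
    by (metis vec.span_base vec.span_scale singletonI)
  then show False
    using assms(2) by blast
qed

lemma minor2_Ints: "x \<in> latL \<Longrightarrow> y \<in> latL \<Longrightarrow> minor2 i j x y \<in> \<int>"
  by (simp add: minor2_def latL_def)

locale plane_without_e0_multiple =
  fixes P :: "(rat^6) set"
  assumes subspace: "vec.subspace P"
    and isotropic: "\<forall>x\<in>P. \<forall>y\<in>P. lform x y = 0"
    and no_e0_multiple: "\<forall>z\<in>P. z \<in> latL \<longrightarrow> z \<noteq> 0 \<longrightarrow> (\<forall>g. \<not> reach z (of_int g *s e0))"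
begin

lemma halving_step:
  assumes u: "u \<in> P" "(1/2) *s (u - w1) \<in> latL" and y: "y \<in> P" "y \<in> latL" "y \<noteq> 0"
  shows "\<exists>z g. z \<in> P \<and> z \<in> latL \<and> g \<noteq> 0 \<and> y = of_int g *s (u - 2 *s z)"
proof -
  obtain g where g: "g \<noteq> 0" "(1/2) *s ((1 / of_int g) *s y - w1) \<in> latL"
    using obtain_w1_congruent_multiple y isotropic no_e0_multiple by blast
  define v where "v = (1 / of_int g) *s y"
  define z where "z = (1/2) *s (u - v)"
  have "z = (1/2) *s (u - w1) - (1/2) *s (v - w1)"
    by (simp add: z_def vec_eq_iff algebra_simps)
  then have "z \<in> latL"
    unfolding v_def using latL_diff[OF u(2) g(2)] by simp
  moreover have "z \<in> P"
    unfolding z_def v_def using subspace u(1) y(1)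
    by (intro vec.subspace_scale vec.subspace_diff) auto
  moreover have "y = of_int g *s (u - 2 *s z)"
    using g(1) by (simp add: z_def v_def vec_eq_iff)
  ultimately show ?thesis
    using g(1) by blast
qed

lemma smaller_minor2:
  assumes u: "u \<in> P" "(1/2) *s (u - w1) \<in> latL" and y: "y \<in> P" "y \<in> latL"
    and D: "minor2 i j u y \<noteq> 0"
  shows "\<exists>z. z \<in> P \<and> z \<in> latL \<and> minor2 i j u z \<noteq> 0 \<and> 2 * \<bar>minor2 i j u z\<bar> \<le> \<bar>minor2 i j u y\<bar>"
proof -
  have "y \<noteq> 0"
    using D by (auto simp: minor2_def)
  then obtain z g where z: "z \<in> P" "z \<in> latL" "g \<noteq> 0" "y = of_int g *s (u - 2 *s z)"
    using halving_step u y by blast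
  have Dy: "minor2 i j u y = - 2 * of_int g * minor2 i j u z"
    unfolding z(4) minor2_def by (simp add: algebra_simps)
  have "(1::rat) \<le> \<bar>of_int g\<bar>"
    using z(3) by linarith
  then have "2 * \<bar>minor2 i j u z\<bar> \<le> \<bar>minor2 i j u y\<bar>"
    unfolding Dy abs_mult by (simp add: mult_right_mono)
  moreover have "minor2 i j u z \<noteq> 0"
    using D Dy by simp
  ultimately show ?thesis
    using z by blast
qed

lemma minor2_eq_0:
  assumes u: "u \<in> P" "(1/2) *s (u - w1) \<in> latL" and y: "y \<in> P" "y \<in> latL"
  shows "minor2 i j u y = 0"
proof -
  have "u = 2 *s ((1/2) *s (u - w1)) + w1"
    by (simp add: vec_eq_iff)
  moreover have "w1 \<in> latL"
    by (simp add: latL_iff)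
  ultimately have "u \<in> latL"
    using u(2) by (metis latL_add latL_smult Ints_numeral)
  have "\<forall>y. y \<in> P \<longrightarrow> y \<in> latL \<longrightarrow> \<bar>minor2 i j u y\<bar> < of_nat n \<longrightarrow> minor2 i j u y = 0" for n
  proof (induct n)
    case 0
    then show ?case
      by simp
  next
    case (Suc n)
    show ?case
    proof (intro allI impI, rule ccontr)
      fix y
      assume y: "y \<in> P" "y \<in> latL" "\<bar>minor2 i j u y\<bar> < of_nat (Suc n)" and "minor2 i j u y \<noteq> 0"
      then obtain z where z: "z \<in> P" "z \<in> latL" "minor2 i j u z \<noteq> 0"
          "2 * \<bar>minor2 i j u z\<bar> \<le> \<bar>minor2 i j u y\<bar>"
        using smaller_minor2 u by blast
      have "1 \<le> \<bar>minor2 i j u z\<bar>"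
        using Ints_nonzero_abs_ge1 minor2_Ints[OF \<open>u \<in> latL\<close> z(2)] z(3) by blast
      then have "\<bar>minor2 i j u z\<bar> < of_nat n"
        using y(3) z(4) unfolding of_nat_Suc by linarith
      then show False
        using Suc z by blast
    qed
  qed
  moreover have "\<bar>minor2 i j u y\<bar> < of_nat (nat \<lceil>\<bar>minor2 i j u y\<bar>\<rceil> + 1)"
    by (simp add: of_nat_nat) linarith
  ultimately show ?thesis
    using y by blast
qed

end

lemma plane_contains_e0_multiple:
  assumes "tiso 2 P"
  shows "\<exists>z\<in>P. z \<in> latL \<and> z \<noteq> 0 \<and> (\<exists>g. reach z (of_int g *s e0))"
proof (rule ccontr)
  assume "\<not> ?thesis"
  then interpret plane_without_e0_multiple P
    using assms by unfold_locales (auto simp: tiso_def)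
  obtain x where x: "x \<in> P" "x \<notin> vec.span {0}"
    using tiso_2_exists_notin_span assms by blast
  obtain s where s: "s \<noteq> 0" "s *s x \<in> latL"
    using exists_smult_in_latL by blast
  have sx: "s *s x \<in> P" "s *s x \<noteq> 0"
    using x s(1) subspace vec.subspace_scale by (auto simp: vec.span_base)
  then obtain g where g: "g \<noteq> 0" "(1/2) *s ((1 / of_int g) *s (s *s x) - w1) \<in> latL"
    using obtain_w1_congruent_multiple s(2) isotropic no_e0_multiple by blast
  define u where "u = (1 / of_int g) *s (s *s x)"
  have u: "u \<in> P" "u \<noteq> 0"
    unfolding u_def using vec.subspace_scale[OF subspace sx(1)] sx(2) g(1)
    by (blast, simp)
  obtain y0 where y0: "y0 \<in> P" "y0 \<notin> vec.span {u}"
    using tiso_2_exists_notin_span assms by blast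
  obtain s' where s': "s' \<noteq> 0" "s' *s y0 \<in> latL"
    using exists_smult_in_latL by blast
  have "s' *s y0 \<notin> vec.span {u}"
    using y0(2) s'(1) vec.span_scale[of "s' *s y0" "{u}" "1/s'"] by auto
  then obtain i j where "minor2 i j u (s' *s y0) \<noteq> 0"
    using exists_nonzero_minor2 u(2) by blast
  moreover have "s' *s y0 \<in> P"
    using y0(1) subspace vec.subspace_scale by blast
  ultimately show False
    using minor2_eq_0 u(1) g(2) s'(2) unfolding u_def by blast
qed

lemma tiso_2_through_e0_obtain_span:
  assumes "tiso 2 Q" "e0 \<in> Q"
  obtains w where "Q = vec.span {e0, w}" "w \<noteq> 0" "w$0 = 0" "w$1 = 0" "lform w w = 0"
proof -
  have Q: "vec.subspace Q" "vec.dim Q = 2" "\<forall>x\<in>Q. \<forall>y\<in>Q. lform x y = 0"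
    using assms(1) by (auto simp: tiso_def)
  obtain y where y: "y \<in> Q" "y \<notin> vec.span {e0}"
    using tiso_2_exists_notin_span assms(1) by blast
  have "y \<noteq> e0"
    using y(2) vec.span_base by blast
  then have "vec.independent {y, e0}"
    using y(2) by (simp add: vec.independent_insert)
  then have "Q \<subseteq> vec.span {y, e0}"
    using Q(2) \<open>y \<noteq> e0\<close> assms(2) y(1) by (intro vec.card_ge_dim_independent) auto
  moreover have "vec.span {y, e0} \<subseteq> Q"
    using Q(1) assms(2) y(1) by (intro vec.span_minimal) auto
  ultimately have Qy: "Q = vec.span {e0, y}"
    by (auto simp: insert_commute)
  define w where "w = y - (y$0) *s e0"
  show ?thesis
  proof (rule that)
    show Qw: "Q = vec.span {e0, w}"
      unfolding Qy w_def by (rule vec_span_pair_diff_smult[symmetric])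
    show "w \<noteq> 0"
      using y(2) by (auto simp: w_def vec.span_singleton)
    have "lform y e0 = 0"
      using Q(3) assms(2) y(1) by blast
    then show "w$0 = 0" "w$1 = 0"
      by (simp_all add: w_def lform_def)
    show "lform w w = 0"
      using Q Qw by (simp add: vec.span_base)
  qed
qed

lemma tiso_2_through_e0_obtain:
  assumes "tiso 2 Q" "e0 \<in> Q"
  obtains c d p q where "Q = vec.span {e0, ivec 0 0 c d p q}" "ivec 0 0 c d p q \<noteq> 0"
    "c * d = 3 * p^2 + q^2"
proof -
  obtain w where w: "Q = vec.span {e0, w}" "w \<noteq> 0" "w$0 = 0" "w$1 = 0" "lform w w = 0"
    using tiso_2_through_e0_obtain_span assms by blast
  obtain s where s: "s \<noteq> 0" "s *s w \<in> latL"
    using exists_smult_in_latL by blast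
  then obtain a b c d p q where iv: "s *s w = ivec a b c d p q"
    using latL_obtain_ivec by blast
  have "(s *s w)$0 = 0" "(s *s w)$1 = 0"
    using w(3,4) by simp_all
  then have iv0: "s *s w = ivec 0 0 c d p q"
    using iv by (simp add: ivec_def)
  show ?thesis
  proof (rule that)
    show "Q = vec.span {e0, ivec 0 0 c d p q}"
      unfolding w(1) iv0[symmetric] using s(1) by (rule vec_span_pair_smult[symmetric])
    show "ivec 0 0 c d p q \<noteq> 0"
      unfolding iv0[symmetric] using s(1) w(2) by simp
    have "lform (ivec 0 0 c d p q) (ivec 0 0 c d p q) = 0"
      unfolding iv0[symmetric] using w(5) by simp
    then show "c * d = 3 * p^2 + q^2"
      unfolding isotropic_ivec_iff by simp
  qed
qed

lemma plane_through_e0_classification: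
  assumes "tiso 2 Q" "e0 \<in> Q"
  shows "\<exists>N\<in>OtplusL. Q = (\<lambda>x. N *v x) ` vec.span {e0, e2} \<or> Q = (\<lambda>x. N *v x) ` vec.span {e0, w1}"
proof -
  obtain c d p q where Q: "Q = vec.span {e0, ivec 0 0 c d p q}" "ivec 0 0 c d p q \<noteq> 0"
      and iso: "c * d = 3 * p^2 + q^2"
    using tiso_2_through_e0_obtain assms by blast
  obtain g t where "reach_e0 (ivec 0 0 c d p q) (of_int g *s t)" and t: "t = e2 \<or> t = w1"
    using reach_e0_normal_form[OF iso] ivec_e2 ivec_w1 by metis
  then obtain M where M: "M \<in> OtplusL" "M *v ivec 0 0 c d p q = of_int g *s t" "M *v e0 = e0"
    by (auto simp: reach_e0_def)
  have "of_int g \<noteq> (0::rat)"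
    using OL_mult_vec_nonzero[OF _ Q(2)] OtplusL_subset_OL M by auto
  have "(\<lambda>x. M *v x) ` Q = vec.span {e0, of_int g *s t}"
    using vec.span_image[of M "{e0, ivec 0 0 c d p q}"] M(2,3) Q(1) by simp
  also have "\<dots> = vec.span {e0, t}"
    using \<open>of_int g \<noteq> 0\<close> by (rule vec_span_pair_smult)
  finally have "(\<lambda>x. M *v x) ` Q = vec.span {e0, t}" .
  moreover obtain N where "N \<in> OtplusL" "N ** M = mat 1"
    using lattice_group_inverse[OF lattice_group_OtplusL M(1)] by blast
  ultimately show ?thesis
    using image_mult_vec_inverse[of N M Q] t by metis
qed

lemma plane_classification:
  assumes "tiso 2 P"
  shows "\<exists>N\<in>OtplusL. P = (\<lambda>x. N *v x) ` vec.span {e0, e2} \<or> P = (\<lambda>x. N *v x) ` vec.span {e0, w1}"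
proof -
  obtain z g where z: "z \<in> P" "z \<noteq> 0" "reach z (of_int g *s e0)"
    using plane_contains_e0_multiple assms by blast
  then obtain M where M: "M \<in> OtplusL" "M *v z = of_int g *s e0"
    by (auto simp: reach_def)
  have "of_int g \<noteq> (0::rat)"
    using OL_mult_vec_nonzero[OF _ z(2)] OtplusL_subset_OL M by auto
  then have "e0 = M *v ((1 / of_int g) *s z)"
    by (simp add: vec.scale M(2) vector_smult_assoc)
  moreover have "(1 / of_int g) *s z \<in> P"
    using assms z(1) by (simp add: tiso_def vec.subspace_scale)
  ultimately have "e0 \<in> (\<lambda>x. M *v x) ` P"
    by blast
  moreover have "tiso 2 ((\<lambda>x. M *v x) ` P)"
    using tiso_image OtplusL_subset_OL M(1) assms by blast
  ultimately obtain N S where N: "N \<in> OtplusL" "(\<lambda>x. M *v x) ` P = (\<lambda>x. N *v x) ` S"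
      and S: "S = vec.span {e0, e2} \<or> S = vec.span {e0, w1}"
    using plane_through_e0_classification by blast
  obtain M' where M': "M' \<in> OtplusL" "M' ** M = mat 1"
    using lattice_group_inverse[OF lattice_group_OtplusL M(1)] by blast
  have "P = (\<lambda>x. (M' ** N) *v x) ` S"
    using arg_cong[OF N(2), of "image (\<lambda>x. M' *v x)"] image_mult_vec_inverse[OF M'(2)]
    by (simp add: image_image matrix_vector_mul_assoc)
  then show ?thesis
    using OtplusL_mult[OF M'(1) N(1)] S by blast
qed

section \<open>Orbits and the Tits building\<close>

lemma orbit_image:
  assumes G: "lattice_group G" and N: "N \<in> G"
  shows "orbit G ((\<lambda>x. N *v x) ` T) = orbit G T"
proof
  show "orbit G ((\<lambda>x. N *v x) ` T) \<subseteq> orbit G T"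
  proof
    fix S
    assume "S \<in> orbit G ((\<lambda>x. N *v x) ` T)"
    then obtain M where "M \<in> G" "S = (\<lambda>x. (M ** N) *v x) ` T"
      by (auto simp: orbit_def image_image matrix_vector_mul_assoc)
    moreover have "M ** N \<in> G"
      using G N \<open>M \<in> G\<close> by (simp add: lattice_group_def)
    ultimately show "S \<in> orbit G T"
      by (auto simp: orbit_def)
  qed
next
  show "orbit G T \<subseteq> orbit G ((\<lambda>x. N *v x) ` T)"
  proof
    fix S
    assume "S \<in> orbit G T"
    then obtain M where M: "M \<in> G" "S = (\<lambda>x. M *v x) ` T"
      by (auto simp: orbit_def)
    obtain N' where N': "N' \<in> G" "N' ** N = mat 1"
      using lattice_group_inverse[OF G N] by blast
    have "S = (\<lambda>x. (M ** N') *v x) ` (\<lambda>x. N *v x) ` T"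
      using M(2) N'(2) by (simp add: image_image matrix_vector_mul_assoc matrix_mul_assoc[symmetric])
    moreover have "M ** N' \<in> G"
      using G M(1) N'(1) by (simp add: lattice_group_def)
    ultimately show "S \<in> orbit G ((\<lambda>x. N *v x) ` T)"
      by (auto simp: orbit_def)
  qed
qed

lemma orbits_eq_pair:
  assumes G: "lattice_group G" "H \<subseteq> G"
    and T: "Q T\<^sub>0" "Q T\<^sub>1"
    and classification: "\<And>S. Q S \<Longrightarrow> \<exists>N\<in>H. S = (\<lambda>x. N *v x) ` T\<^sub>0 \<or> S = (\<lambda>x. N *v x) ` T\<^sub>1"
  shows "{orbit G S | S. Q S} = {orbit G T\<^sub>0, orbit G T\<^sub>1}"
proof -
  have "orbit G S \<in> {orbit G T\<^sub>0, orbit G T\<^sub>1}" if "Q S" for S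
    using classification[OF that] orbit_image[OF G(1)] G(2) by blast
  then show ?thesis
    using T by blast
qed

lemma orbit_neq:
  assumes G: "lattice_group G" and w: "\<And>M. M \<in> G \<Longrightarrow> M *v w \<notin> S" "w \<in> T"
  shows "orbit G S \<noteq> orbit G T"
proof
  assume "orbit G S = orbit G T"
  moreover have "T \<in> orbit G T"
    using G by (auto simp: orbit_def lattice_group_def intro!: exI[of _ "mat 1"])
  ultimately have "T \<in> orbit G S"
    by simp
  then obtain M where M: "M \<in> G" "T = (\<lambda>x. M *v x) ` S"
    unfolding orbit_def by blast
  then obtain x where "x \<in> S" "w = M *v x"
    using w(2) by blast
  moreover obtain N where "N \<in> G" "N ** M = mat 1"
    using lattice_group_inverse[OF G M(1)] by blast
  ultimately show False
    using w(1)[of N] by (simp add: matrix_vector_mul_assoc)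
qed

lemma tiso_standard:
  "tiso 1 (vec.span {e0})" "tiso 1 (vec.span {w1})"
  "tiso 2 (vec.span {e0, e2})" "tiso 2 (vec.span {e0, w1})"
  by (rule tiso_span; auto simp: vec.independent_insert vec.span_singleton vec6_arith)+

theorem mainTheorem10:
  assumes "G = OtplusL \<or> G = OplusL"
  shows "\<exists>l0 l1 P0 P1.
           tiso 1 l0 \<and> tiso 1 l1 \<and> tiso 2 P0 \<and> tiso 2 P1
         \<and> {orbit G l | l. tiso 1 l} = {orbit G l0, orbit G l1}
         \<and> orbit G l0 \<noteq> orbit G l1
         \<and> {orbit G P | P. tiso 2 P} = {orbit G P0, orbit G P1}
         \<and> orbit G P0 \<noteq> orbit G P1
         \<and> bedge G l0 P0 \<and> bedge G l0 P1 \<and> bedge G l1 P1 \<and> \<not> bedge G l1 P0"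
proof -
  have G: "lattice_group G" "OtplusL \<subseteq> G"
    using assms lattice_group_OtplusL lattice_group_OplusL OtplusL_subset_OplusL by blast+
  then have w1_out: "M *v w1 \<notin> vec.span {e0, e2}" if "M \<in> G" for M
    using that OL_image_w1_notin_span_e0_e2 by (auto simp: lattice_group_def)
  have incl: "vec.span {e0} \<subseteq> vec.span {e0, e2}" "vec.span {e0} \<subseteq> vec.span {e0, w1}"
    "vec.span {w1} \<subseteq> vec.span {e0, w1}"
    by (rule vec.span_mono; auto)+
  have w1: "w1 \<in> vec.span {w1}" "w1 \<in> vec.span {e0, w1}"
    by (simp_all add: vec.span_base)
  have "mat 1 \<in> G"
    using G by (simp add: lattice_group_def)
  then have edges: "bedge G (vec.span {e0}) (vec.span {e0, e2})" "bedge G (vec.span {e0}) (vec.span {e0, w1})"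
    "bedge G (vec.span {w1}) (vec.span {e0, w1})"
    unfolding bedge_def using incl by force+
  have "\<not> bedge G (vec.span {w1}) (vec.span {e0, e2})"
    unfolding bedge_def using w1_out w1(1) by blast
  moreover have "orbit G (vec.span {e0}) \<noteq> orbit G (vec.span {w1})"
    using orbit_neq[OF G(1)] w1_out incl(1) w1(1) by blast
  moreover have "orbit G (vec.span {e0, e2}) \<noteq> orbit G (vec.span {e0, w1})"
    using orbit_neq[OF G(1)] w1_out w1(2) by blast
  ultimately show ?thesis
    using tiso_standard edges
      orbits_eq_pair[OF G tiso_standard(1,2) line_classification]
      orbits_eq_pair[OF G tiso_standard(3,4) plane_classification]
    by (intro exI conjI) assumption+
qed

end
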